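(* Let $d=s_c+s_e+s_3$ with block sizes $s_c,s_e,s_3\ge 0$, let $A_1\in\mathbb{R}^{s_c\times s_c}$, $A_{12}\in\mathbb{R}^{s_c\times s_e}$, $A_2\in\mathbb{R}^{s_e\times s_e}$, $A_{32},\bar A_{32}\in\mathbb{R}^{s_3\times s_e}$, $A_3,\bar A_3\in\mathbb{R}^{s_3\times s_3}$, $B_1\in\mathbb{R}^{s_c\times d_u}$, and set $$A=\begin{bmatrix}A_1&A_{12}&0\\0&A_2&0\\0&A_{32}&A_3\end{bmatrix},\quad \bar A=\begin{bmatrix}A_1&A_{12}&0\\0&A_2&0\\0&\bar A_{32}&\bar A_3\end{bmatrix},\quad B=\begin{bmatrix}B_1\\0\\0\end{bmatrix}.$$ (1) Let $I_{1+}\in\mathbb{R}^{d\times d}$ be a diagonal matrix with $I_{1+}(i,i)=1$ for every coordinate $i$ of the first block and $I_{1+}(i,i)\in\{0,1\}$ for every other coordinate $i$. If $L_1=(A,B,I_d)$ and $L_2=(A,B,I_{1+})$ are stabilizable, then $K^*(L_1)=K^*(L_2)$. (2) If $L_1=(A,B,I_d)$ and $L_2=(\bar A,B,I_d)$ are stabilizable, then $K^*(L_1)=K^*(L_2)$.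
   Context: An LQ system $L=(A,B,Q)$ has state $x_t\in\mathbb{R}^d$, input $u_t\in\mathbb{R}^{d_u}$ and dynamics $x_{t+1}=Ax_t+Bu_t+\xi_t$, where the $\xi_t$ are i.i.d. zero-mean noise vectors. The cost is $\mathbb{E}\big[\sum_{t\ge1}x_t^\top Qx_t+u_t^\top u_t\big]$ (input cost matrix $R=I_{d_u}$), with $Q\succeq0$. The system is stabilizable if there is $K\in\mathbb{R}^{d_u\times d}$ with $\rho(A+BK)<1$, where $\rho$ is the spectral radius. $K^*(L)$ denotes the optimal controller of $L$, i.e. the linear state-feedback gain $K$ such that the policy $u_t=Kx_t$ minimizes the cost. An LQ system whose matrices have the three-block form above is called a partially controllable LQ (PC-LQ). *)

theory Defs
  imports "Jordan_Normal_Form.Spectral_Radius"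
begin

definition closed_loop :: "real mat \<Rightarrow> real mat \<Rightarrow> real mat \<Rightarrow> real mat" where
  "closed_loop A B K = A + B * K"

definition stabilizing :: "real mat \<Rightarrow> real mat \<Rightarrow> real mat \<Rightarrow> bool" where
  "stabilizing A B K \<longleftrightarrow> K \<in> carrier_mat (dim_col B) (dim_row A) \<and>
     spectral_radius (map_mat complex_of_real (closed_loop A B K)) < 1"

definition stabilizable :: "real mat \<Rightarrow> real mat \<Rightarrow> bool" where
  "stabilizable A B \<longleftrightarrow> (\<exists>K. stabilizing A B K)"

(* The expected (average) cost
   of the noisy system under i.i.d. zero-mean noise is determined by this quadratic form. *)
definition lq_cost :: "real mat \<Rightarrow> real mat \<Rightarrow> real mat \<Rightarrow> real mat \<Rightarrow> real vec \<Rightarrow> real" where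
  "lq_cost A B Q K x =
     (\<Sum>t. let y = (closed_loop A B K ^\<^sub>m t) *\<^sub>v x in y \<bullet> (Q *\<^sub>v y) + (K *\<^sub>v y) \<bullet> (K *\<^sub>v y))"

definition optimal_gain :: "real mat \<Rightarrow> real mat \<Rightarrow> real mat \<Rightarrow> real mat \<Rightarrow> bool" where
  "optimal_gain A B Q K \<longleftrightarrow> stabilizing A B K \<and>
     (\<forall>K'. stabilizing A B K' \<longrightarrow>
        (\<forall>x \<in> carrier_vec (dim_row A). lq_cost A B Q K x \<le> lq_cost A B Q K' x))"

definition Kstar :: "real mat \<Rightarrow> real mat \<Rightarrow> real mat \<Rightarrow> real mat" where
  "Kstar A B Q = (THE K. optimal_gain A B Q K)"

definition pc_A :: "nat \<Rightarrow> nat \<Rightarrow> nat \<Rightarrow> real mat \<Rightarrow> real mat \<Rightarrow> real mat \<Rightarrow> real mat \<Rightarrow> real mat \<Rightarrow> real mat" where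
  "pc_A sc se s3 A1 A12 A2 A32 A3 = mat (sc + se + s3) (sc + se + s3) (\<lambda>(i, j).
     if i < sc then
       (if j < sc then A1 $$ (i, j) else if j < sc + se then A12 $$ (i, j - sc) else 0)
     else if i < sc + se then
       (if sc \<le> j \<and> j < sc + se then A2 $$ (i - sc, j - sc) else 0)
     else
       (if j < sc then 0 else if j < sc + se then A32 $$ (i - sc - se, j - sc)
        else A3 $$ (i - sc - se, j - sc - se)))"

definition pc_B :: "nat \<Rightarrow> nat \<Rightarrow> nat \<Rightarrow> nat \<Rightarrow> real mat \<Rightarrow> real mat" where
  "pc_B sc se s3 du B1 = mat (sc + se + s3) du (\<lambda>(i, j). if i < sc then B1 $$ (i, j) else 0)"

end

theory Submission
  imports Defs
begin

(* The coordinates outside the first block are not driven by the input: B vanishes there and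
   these rows of A ignore the first block, so along every trajectory they evolve as A^t x,
   whatever the gain.

   (1) Changing the state weight on these coordinates only shifts the cost of every stabilizing
   gain by one and the same finite amount, so the optimal gains do not change.

   (2) An optimal gain K for Q = I has a quadratic value x . P x and is greedy for it, since the
   greedy gain would otherwise improve on K. Completing squares then bounds the cost of every
   decaying trajectory (w, u) from below by w_0 . P w_0 + |u_0 - K w_0|^2. Starting a trajectory
   at a with the inputs of the closed loop from b, where a and b differ only in the third block,
   shows that K ignores the third block. Hence the closed loops of K for A and \bar A agree on
   the first two blocks, and replaying the inputs of any gain for \bar A in the system A changes
   the cost only by a gain-independent term; so K is optimal for \bar A, and vice versa.

   Both parts show that the two problems have the same optimal gains, so the definite
   descriptions Kstar agree without existence or uniqueness of an optimal gain being needed. *)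

section \<open>Geometrically decaying sequences\<close>

definition geometric_decay :: "(nat \<Rightarrow> real) \<Rightarrow> bool" where
  "geometric_decay f \<longleftrightarrow> (\<exists>c r. 0 \<le> r \<and> r < 1 \<and> (\<forall>t. \<bar>f t\<bar> \<le> c * r ^ t))"

lemma geometric_decayI: "0 \<le> r \<Longrightarrow> r < 1 \<Longrightarrow> (\<And>t. \<bar>f t\<bar> \<le> c * r ^ t) \<Longrightarrow> geometric_decay f"
  unfolding geometric_decay_def by blast

lemma geometric_decayE:
  assumes "geometric_decay f"
  obtains c r where "0 \<le> c" "0 \<le> r" "r < 1" "\<And>t. \<bar>f t\<bar> \<le> c * r ^ t"
proof -
  from assms obtain c r where r: "0 \<le> r" "r < 1" and bound: "\<And>t. \<bar>f t\<bar> \<le> c * r ^ t"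
    unfolding geometric_decay_def by blast
  have "0 \<le> c" using bound[of 0] by simp
  with r bound show ?thesis using that by blast
qed

lemma geometric_decay_zero [simp]: "geometric_decay (\<lambda>t. 0)"
  by (rule geometric_decayI[of 0 _ 0]) auto

lemma geometric_decay_add:
  assumes "geometric_decay f" "geometric_decay g"
  shows "geometric_decay (\<lambda>t. f t + g t)"
proof -
  obtain c1 r1 where 1: "0 \<le> c1" "0 \<le> r1" "r1 < 1" "\<And>t. \<bar>f t\<bar> \<le> c1 * r1 ^ t"
    using geometric_decayE[OF assms(1)] by blast
  obtain c2 r2 where 2: "0 \<le> c2" "0 \<le> r2" "r2 < 1" "\<And>t. \<bar>g t\<bar> \<le> c2 * r2 ^ t"
    using geometric_decayE[OF assms(2)] by blast
  show ?thesis
  proof (rule geometric_decayI[of "max r1 r2"])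
    fix t
    have "c1 * r1 ^ t \<le> c1 * max r1 r2 ^ t" "c2 * r2 ^ t \<le> c2 * max r1 r2 ^ t"
      using 1 2 by (auto intro!: mult_left_mono power_mono)
    then show "\<bar>f t + g t\<bar> \<le> (c1 + c2) * max r1 r2 ^ t"
      using 1(4)[of t] 2(4)[of t] by (simp add: distrib_right)
  qed (use 1 2 in auto)
qed

lemma geometric_decay_cmult:
  assumes "geometric_decay f"
  shows "geometric_decay (\<lambda>t. a * f t)"
proof -
  obtain c r where "0 \<le> r" "r < 1" and bound: "\<And>t. \<bar>f t\<bar> \<le> c * r ^ t"
    using geometric_decayE[OF assms] by blast
  then show ?thesis
    by (intro geometric_decayI[of r _ "\<bar>a\<bar> * c"])
       (auto simp: abs_mult mult.assoc intro: mult_left_mono)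
qed

lemma geometric_decay_diff:
  assumes "geometric_decay f" "geometric_decay g"
  shows "geometric_decay (\<lambda>t. f t - g t)"
  using geometric_decay_add[OF assms(1) geometric_decay_cmult[OF assms(2), of "-1"]] by simp

lemma geometric_decay_mult:
  assumes "geometric_decay f" "geometric_decay g"
  shows "geometric_decay (\<lambda>t. f t * g t)"
proof -
  obtain c1 r1 where 1: "0 \<le> c1" "0 \<le> r1" "r1 < 1" "\<And>t. \<bar>f t\<bar> \<le> c1 * r1 ^ t"
    using geometric_decayE[OF assms(1)] by blast
  obtain c2 r2 where 2: "0 \<le> c2" "0 \<le> r2" "r2 < 1" "\<And>t. \<bar>g t\<bar> \<le> c2 * r2 ^ t"
    using geometric_decayE[OF assms(2)] by blast
  have "r1 * r2 < 1"
    using 1 2 mult_left_mono[of r2 1 r1] by linarith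
  moreover have "\<bar>f t * g t\<bar> \<le> (c1 * c2) * (r1 * r2) ^ t" for t
  proof -
    have "\<bar>f t * g t\<bar> \<le> (c1 * r1 ^ t) * (c2 * r2 ^ t)"
      unfolding abs_mult using 1 2 by (intro mult_mono) auto
    then show ?thesis by (simp add: power_mult_distrib ac_simps)
  qed
  ultimately show ?thesis using 1 2 by (intro geometric_decayI) auto
qed

lemma geometric_decay_sum:
  "finite S \<Longrightarrow> (\<And>i. i \<in> S \<Longrightarrow> geometric_decay (f i)) \<Longrightarrow> geometric_decay (\<lambda>t. \<Sum>i\<in>S. f i t)"
  by (induction S rule: finite_induct) (auto intro: geometric_decay_add)

lemma geometric_decay_summable:
  assumes "geometric_decay f"
  shows "summable f"
proof -
  obtain c r where "0 \<le> c" "0 \<le> r" "r < 1" and bound: "\<And>t. \<bar>f t\<bar> \<le> c * r ^ t"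
    using geometric_decayE[OF assms] by blast
  then have "summable (\<lambda>t. c * r ^ t)" by (intro summable_mult summable_geometric) auto
  then show ?thesis by (rule summable_comparison_test[rotated]) (use bound in auto)
qed

lemma geometric_decay_LIMSEQ: "geometric_decay f \<Longrightarrow> f \<longlonglongrightarrow> 0"
  by (rule summable_LIMSEQ_zero[OF geometric_decay_summable])

lemma sums_head_le:
  assumes "f sums (s :: real)" "\<And>t. 0 \<le> f t"
  shows "f 0 \<le> s"
proof -
  have "sum f {0} \<le> suminf f" using assms by (intro sum_le_suminf) (auto simp: sums_summable)
  then show ?thesis using sums_unique[OF assms(1)] by simp
qed

definition geometric_decay_vec :: "nat \<Rightarrow> (nat \<Rightarrow> real vec) \<Rightarrow> bool" where
  "geometric_decay_vec n y \<longleftrightarrow> (\<forall>t. y t \<in> carrier_vec n) \<and> (\<forall>i<n. geometric_decay (\<lambda>t. y t $ i))"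

lemma geometric_decay_vecI:
  "(\<And>t. y t \<in> carrier_vec n) \<Longrightarrow> (\<And>i. i < n \<Longrightarrow> geometric_decay (\<lambda>t. y t $ i)) \<Longrightarrow> geometric_decay_vec n y"
  unfolding geometric_decay_vec_def by blast

lemma geometric_decay_vec_carrier: "geometric_decay_vec n y \<Longrightarrow> y t \<in> carrier_vec n"
  unfolding geometric_decay_vec_def by blast

lemma geometric_decay_vec_index: "geometric_decay_vec n y \<Longrightarrow> i < n \<Longrightarrow> geometric_decay (\<lambda>t. y t $ i)"
  unfolding geometric_decay_vec_def by blast

lemma geometric_decay_vec_LIMSEQ: "geometric_decay_vec n y \<Longrightarrow> i < n \<Longrightarrow> (\<lambda>t. y t $ i) \<longlonglongrightarrow> 0"
  by (rule geometric_decay_LIMSEQ[OF geometric_decay_vec_index])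

lemma geometric_decay_vec_mult_mat_vec:
  assumes X: "X \<in> carrier_mat m n" and y: "geometric_decay_vec n y"
  shows "geometric_decay_vec m (\<lambda>t. X *\<^sub>v y t)"
proof (rule geometric_decay_vecI)
  show "X *\<^sub>v y t \<in> carrier_vec m" for t
    using X geometric_decay_vec_carrier[OF y] by auto
  fix i assume i: "i < m"
  have "(X *\<^sub>v y t) $ i = (\<Sum>j\<in>{0..<n}. X $$ (i,j) * y t $ j)" for t
    using X i geometric_decay_vec_carrier[OF y, of t] by (auto simp: scalar_prod_def)
  moreover have "geometric_decay (\<lambda>t. \<Sum>j\<in>{0..<n}. X $$ (i,j) * y t $ j)"
    using y by (intro geometric_decay_sum geometric_decay_cmult) (auto simp: geometric_decay_vec_def)
  ultimately show "geometric_decay (\<lambda>t. (X *\<^sub>v y t) $ i)" by simp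
qed

lemma geometric_decay_scalar_prod:
  assumes y: "geometric_decay_vec n y" and z: "geometric_decay_vec n z"
  shows "geometric_decay (\<lambda>t. y t \<bullet> z t)"
proof -
  have "y t \<bullet> z t = (\<Sum>j\<in>{0..<n}. y t $ j * z t $ j)" for t
    using geometric_decay_vec_carrier[OF z, of t] by (auto simp: scalar_prod_def)
  moreover have "geometric_decay (\<lambda>t. \<Sum>j\<in>{0..<n}. y t $ j * z t $ j)"
    using y z by (intro geometric_decay_sum geometric_decay_mult) (auto simp: geometric_decay_vec_def)
  ultimately show ?thesis by simp
qed

section \<open>Spectral radius and decay of matrix powers\<close>

lemma pow_mat_Suc_mult_mat_vec:
  assumes A: "(A :: 'a::semiring_1 mat) \<in> carrier_mat n n" and x: "x \<in> carrier_vec n"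
  shows "A ^\<^sub>m Suc t *\<^sub>v x = A *\<^sub>v (A ^\<^sub>m t *\<^sub>v x)"
proof -
  have "A ^\<^sub>m t * A = A * A ^\<^sub>m t"
  proof (induction t)
    case (Suc t)
    have "A ^\<^sub>m Suc t * A = (A * A ^\<^sub>m t) * A" using Suc by simp
    also have "\<dots> = A * A ^\<^sub>m Suc t" using A by (simp add: assoc_mult_mat[of _ n n _ n _ n])
    finally show ?case .
  qed (use A in simp)
  then show ?thesis using A x by (simp add: assoc_mult_mat_vec[of _ n n _ n])
qed

lemma pow_mat_mult_vec_carrier:
  "A \<in> carrier_mat n n \<Longrightarrow> x \<in> carrier_vec n \<Longrightarrow> A ^\<^sub>m t *\<^sub>v x \<in> carrier_vec n"
  by (metis mult_mat_vec_carrier pow_carrier_mat)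

lemma eigenvector_smult_mat:
  assumes "A \<in> carrier_mat n n" "eigenvector A v \<mu>"
  shows "eigenvector (c \<cdot>\<^sub>m A) v (c * \<mu>)"
proof -
  have "(c \<cdot>\<^sub>m A) *\<^sub>v v = (c * \<mu>) \<cdot>\<^sub>v v"
  proof (rule eq_vecI)
    fix i assume "i < dim_vec ((c * \<mu>) \<cdot>\<^sub>v v)"
    then show "((c \<cdot>\<^sub>m A) *\<^sub>v v) $ i = ((c * \<mu>) \<cdot>\<^sub>v v) $ i"
      using assms index_mult_mat_vec[of i A v]
      by (auto simp: eigenvector_def scalar_prod_def sum_distrib_left mult.assoc)
  qed (use assms in \<open>auto simp: eigenvector_def\<close>)
  then show ?thesis using assms by (auto simp: eigenvector_def)
qed

lemma smult_pow_mat: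
  assumes X: "(X :: 'a::comm_ring_1 mat) \<in> carrier_mat n n"
  shows "(c \<cdot>\<^sub>m X) ^\<^sub>m t = c ^ t \<cdot>\<^sub>m X ^\<^sub>m t"
proof (induction t)
  case (Suc t)
  have "(c \<cdot>\<^sub>m X) ^\<^sub>m Suc t = (c ^ t \<cdot>\<^sub>m X ^\<^sub>m t) * (c \<cdot>\<^sub>m X)" using Suc by simp
  also have "\<dots> = c ^ t \<cdot>\<^sub>m (c \<cdot>\<^sub>m (X ^\<^sub>m t * X))"
    using X by (metis mult_smult_assoc_mat mult_smult_distrib pow_carrier_mat smult_carrier_mat)
  also have "\<dots> = c ^ Suc t \<cdot>\<^sub>m X ^\<^sub>m Suc t" by (auto simp: mult.commute)
  finally show ?case .
qed (use X in auto)

lemma spectral_radius_smult_less_1: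
  assumes A: "(A :: complex mat) \<in> carrier_mat n n" and n: "0 < n"
    and r: "0 < r" "spectral_radius A < r"
  shows "spectral_radius (complex_of_real (1 / r) \<cdot>\<^sub>m A) < 1"
proof -
  let ?N = "complex_of_real (1 / r) \<cdot>\<^sub>m A"
  have N: "?N \<in> carrier_mat n n" using A by simp
  obtain \<mu> where "\<mu> \<in> spectrum ?N" and sr_N: "spectral_radius ?N = norm \<mu>"
    using spectral_radius_mem_max(1)[OF N n] by auto
  then obtain v where "eigenvector ?N v \<mu>" unfolding spectrum_def eigenvalue_def by auto
  then have "eigenvector (complex_of_real r \<cdot>\<^sub>m ?N) v (complex_of_real r * \<mu>)"
    by (rule eigenvector_smult_mat[OF N])
  moreover have "complex_of_real r \<cdot>\<^sub>m ?N = A"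
  proof (rule eq_matI)
    fix i j assume "i < dim_row A" "j < dim_col A"
    then show "(complex_of_real r \<cdot>\<^sub>m ?N) $$ (i,j) = A $$ (i,j)" using A r(1) by (simp add: field_simps)
  qed (use A in auto)
  ultimately have "norm (complex_of_real r * \<mu>) \<in> norm ` spectrum A"
    unfolding spectrum_def eigenvalue_def by auto
  then have "r * norm \<mu> \<le> spectral_radius A"
    using spectral_radius_mem_max(2)[OF A n] r(1) by (auto simp: norm_mult)
  then have "r * norm \<mu> < r * 1" using r(2) by simp
  then show ?thesis using sr_N r(1) by (simp only: mult_less_cancel_left_pos)
qed

lemma spectral_radius_less_1_pow_bound:
  fixes M :: "real mat"
  assumes M: "M \<in> carrier_mat n n" and n: "0 < n"
    and sr: "spectral_radius (map_mat complex_of_real M) < 1"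
  obtains c r where "0 \<le> r" "r < 1" "\<And>t i j. i < n \<Longrightarrow> j < n \<Longrightarrow> \<bar>(M ^\<^sub>m t) $$ (i,j)\<bar> \<le> c * r ^ t"
proof -
  \<comment> \<open>Rescale by a radius strictly between the spectral radius and 1; the powers of the
     rescaled matrix stay bounded.\<close>
  let ?Mc = "map_mat complex_of_real M"
  have Mc: "?Mc \<in> carrier_mat n n" using M by auto
  define r where "r = (1 + spectral_radius ?Mc) / 2"
  have "0 \<le> spectral_radius ?Mc" using spectral_radius_mem_max(1)[OF Mc n] by auto
  then have r: "0 < r" "r < 1" "spectral_radius ?Mc < r" using sr unfolding r_def by auto
  define N where "N = complex_of_real (1 / r) \<cdot>\<^sub>m ?Mc"
  have N: "N \<in> carrier_mat n n" unfolding N_def using M by auto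
  obtain c where c: "\<And>t. norm_bound (N ^\<^sub>m t) c"
    using spectral_radius_jnf_norm_bound_less_1_upper_triangular[OF N]
      spectral_radius_smult_less_1[OF Mc n r(1,3)] unfolding N_def by auto
  have "\<bar>(M ^\<^sub>m t) $$ (i,j)\<bar> \<le> c * r ^ t" if ij: "i < n" "j < n" for t i j
  proof -
    have "(N ^\<^sub>m t) $$ (i,j) = complex_of_real ((1 / r) ^ t * (M ^\<^sub>m t) $$ (i,j))"
      unfolding N_def using M ij by (simp add: smult_pow_mat of_real_hom.mat_hom_pow[symmetric, OF M])
    moreover have "norm ((N ^\<^sub>m t) $$ (i,j)) \<le> c"
      using c[of t] ij N unfolding norm_bound_def by auto
    ultimately have "\<bar>(1 / r) ^ t * (M ^\<^sub>m t) $$ (i,j)\<bar> \<le> c" by (metis norm_of_real)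
    then have "\<bar>(M ^\<^sub>m t) $$ (i,j)\<bar> / r ^ t \<le> c" using r(1) by (simp add: abs_mult power_divide)
    then show ?thesis using r(1) by (simp add: divide_le_eq)
  qed
  then show ?thesis using that[of r c] r by auto
qed

lemma spectral_radius_less_1_geometric_decay:
  fixes M :: "real mat"
  assumes M: "M \<in> carrier_mat n n" and x: "x \<in> carrier_vec n"
    and sr: "0 < n \<Longrightarrow> spectral_radius (map_mat complex_of_real M) < 1"
  shows "geometric_decay_vec n (\<lambda>t. M ^\<^sub>m t *\<^sub>v x)"
proof (rule geometric_decay_vecI)
  show "M ^\<^sub>m t *\<^sub>v x \<in> carrier_vec n" for t using M x by (rule pow_mat_mult_vec_carrier)
  fix i assume i: "i < n"
  obtain c r where r: "0 \<le> r" "r < 1"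
    and bound: "\<And>t i j. i < n \<Longrightarrow> j < n \<Longrightarrow> \<bar>(M ^\<^sub>m t) $$ (i,j)\<bar> \<le> c * r ^ t"
    using spectral_radius_less_1_pow_bound[OF M _ sr] i by (metis gr_implies_not0 neq0_conv)
  have "(M ^\<^sub>m t *\<^sub>v x) $ i = (\<Sum>j\<in>{0..<n}. x $ j * (M ^\<^sub>m t) $$ (i,j))" for t
    using M x i by (auto simp: scalar_prod_def mult.commute)
  moreover have "geometric_decay (\<lambda>t. \<Sum>j\<in>{0..<n}. x $ j * (M ^\<^sub>m t) $$ (i,j))"
    using i r bound by (intro geometric_decay_sum geometric_decay_cmult geometric_decayI) auto
  ultimately show "geometric_decay (\<lambda>t. (M ^\<^sub>m t *\<^sub>v x) $ i)" by simp
qed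

lemma of_real_mat_mult_vec_index:
  fixes M :: "real mat"
  assumes M: "M \<in> carrier_mat m n" and v: "v \<in> carrier_vec n" and i: "i < m"
  shows "(map_mat complex_of_real M *\<^sub>v v) $ i
    = complex_of_real ((M *\<^sub>v vec n (\<lambda>j. Re (v $ j))) $ i)
      + \<i> * complex_of_real ((M *\<^sub>v vec n (\<lambda>j. Im (v $ j))) $ i)"
proof -
  have "(map_mat complex_of_real M *\<^sub>v v) $ i = (\<Sum>j = 0..<n. complex_of_real (M $$ (i,j)) * v $ j)"
    using M v i by (simp add: scalar_prod_def)
  also have "\<dots> = (\<Sum>j = 0..<n. complex_of_real (M $$ (i,j) * Re (v $ j))
      + \<i> * complex_of_real (M $$ (i,j) * Im (v $ j)))"
    by (intro sum.cong refl) (simp add: complex_eq_iff)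
  also have "\<dots> = complex_of_real ((M *\<^sub>v vec n (\<lambda>j. Re (v $ j))) $ i)
      + \<i> * complex_of_real ((M *\<^sub>v vec n (\<lambda>j. Im (v $ j))) $ i)"
    using M i by (simp add: scalar_prod_def sum.distrib sum_distrib_left)
  finally show ?thesis .
qed

lemma spectral_radius_less_1_if_LIMSEQ:
  fixes M :: "real mat"
  assumes M: "M \<in> carrier_mat n n" and n: "0 < n"
    and lim: "\<And>x i. x \<in> carrier_vec n \<Longrightarrow> i < n \<Longrightarrow> (\<lambda>t. (M ^\<^sub>m t *\<^sub>v x) $ i) \<longlonglongrightarrow> 0"
  shows "spectral_radius (map_mat complex_of_real M) < 1"
proof (rule ccontr)
  \<comment> \<open>An eigenvector for an eigenvalue of modulus at least 1 does not decay; its real and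
     imaginary parts are real initial states, one of which does not decay either.\<close>
  let ?Mc = "map_mat complex_of_real M"
  have Mc: "?Mc \<in> carrier_mat n n" using M by auto
  assume "\<not> ?thesis"
  moreover obtain \<mu> where "\<mu> \<in> spectrum ?Mc" and sr: "spectral_radius ?Mc = norm \<mu>"
    using spectral_radius_mem_max(1)[OF Mc n] by auto
  ultimately have \<mu>: "1 \<le> norm \<mu>" by simp
  from \<open>\<mu> \<in> spectrum ?Mc\<close> obtain v where ev: "eigenvector ?Mc v \<mu>"
    unfolding spectrum_def eigenvalue_def by auto
  then have v: "v \<in> carrier_vec n" "v \<noteq> 0\<^sub>v n" unfolding eigenvector_def using Mc by auto
  then obtain i where i: "i < n" and vi: "v $ i \<noteq> 0" by (metis eq_vecI index_zero_vec carrier_vecD)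
  define a where "a = vec n (\<lambda>j. Re (v $ j))"
  define b where "b = vec n (\<lambda>j. Im (v $ j))"
  have ab: "a \<in> carrier_vec n" "b \<in> carrier_vec n" unfolding a_def b_def by auto
  have split: "(?Mc ^\<^sub>m t *\<^sub>v v) $ i
      = complex_of_real ((M ^\<^sub>m t *\<^sub>v a) $ i) + \<i> * complex_of_real ((M ^\<^sub>m t *\<^sub>v b) $ i)" for t
    unfolding a_def b_def of_real_hom.mat_hom_pow[symmetric, OF M]
    by (rule of_real_mat_mult_vec_index[OF _ v(1) i]) (use M in simp)
  have "(\<lambda>t. complex_of_real ((M ^\<^sub>m t *\<^sub>v a) $ i) + \<i> * complex_of_real ((M ^\<^sub>m t *\<^sub>v b) $ i))
      \<longlonglongrightarrow> 0 + \<i> * 0"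
    using tendsto_of_real[OF lim[OF ab(1) i]] tendsto_of_real[OF lim[OF ab(2) i]]
    by (intro tendsto_add tendsto_mult tendsto_const) simp_all
  then have "(\<lambda>t. norm ((?Mc ^\<^sub>m t *\<^sub>v v) $ i)) \<longlonglongrightarrow> 0" unfolding split by (simp add: tendsto_norm_zero)
  then have "\<forall>\<^sub>F t in sequentially. norm ((?Mc ^\<^sub>m t *\<^sub>v v) $ i) < norm (v $ i)"
    using vi by (intro order_tendstoD(2)) auto
  then obtain t where "norm ((?Mc ^\<^sub>m t *\<^sub>v v) $ i) < norm (v $ i)"
    unfolding eventually_sequentially by blast
  moreover have "norm (v $ i) \<le> norm ((?Mc ^\<^sub>m t *\<^sub>v v) $ i)"
    using eigenvector_pow[OF Mc ev, of t] i v \<mu>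
    by (simp add: norm_mult norm_power one_le_power mult_le_cancel_right1)
  ultimately show False by simp
qed

section \<open>Real vectors and quadratic forms\<close>

lemma scalar_prod_self_nonneg: "0 \<le> (v :: real vec) \<bullet> v"
  using conjugate_square_ge_0_vec[of v] by simp

lemma scalar_prod_self_eq_0_iff: "(v :: real vec) \<in> carrier_vec n \<Longrightarrow> v \<bullet> v = 0 \<longleftrightarrow> v = 0\<^sub>v n"
  using conjugate_square_eq_0_vec[of v n] by simp

lemma eq_if_scalar_prod_self_diff_le_0:
  assumes v: "(v :: real vec) \<in> carrier_vec n" and w: "w \<in> carrier_vec n"
    and le: "(v - w) \<bullet> (v - w) \<le> 0"
  shows "v = w"
proof -
  have "v - w = 0\<^sub>v n"
    using le scalar_prod_self_nonneg[of "v - w"] scalar_prod_self_eq_0_iff[of "v - w" n] v w by simp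
  then have "(v - w) $ i = 0" if "i < n" for i using that by simp
  then show ?thesis using v w by (intro eq_vecI) auto
qed

lemma sq_index_le_scalar_prod_self:
  assumes "(v :: real vec) \<in> carrier_vec n" "i < n"
  shows "(v $ i)^2 \<le> v \<bullet> v"
proof -
  have "(v $ i)^2 = (\<Sum>j\<in>{i}. v $ j * v $ j)" by (simp add: power2_eq_square)
  also have "\<dots> \<le> (\<Sum>j\<in>{0..<n}. v $ j * v $ j)" using assms(2) by (intro sum_mono2) auto
  finally show ?thesis using assms(1) by (simp add: scalar_prod_def)
qed

lemma LIMSEQ_index_if_scalar_prod_self:
  assumes y: "\<And>t. (y t :: real vec) \<in> carrier_vec n" and lim: "(\<lambda>t. y t \<bullet> y t) \<longlonglongrightarrow> 0" and i: "i < n"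
  shows "(\<lambda>t. y t $ i) \<longlonglongrightarrow> 0"
proof -
  have "(\<lambda>t. (y t $ i)^2) \<longlonglongrightarrow> 0"
    using sq_index_le_scalar_prod_self[OF y i]
    by (intro tendsto_sandwich[OF _ _ tendsto_const lim]) auto
  then have "(\<lambda>t. sqrt ((y t $ i)^2)) \<longlonglongrightarrow> 0" using tendsto_real_sqrt by fastforce
  then show ?thesis by (simp add: tendsto_rabs_zero_iff)
qed

lemma quadratic_form_LIMSEQ:
  fixes P :: "real mat"
  assumes P: "P \<in> carrier_mat n n" and y: "\<And>t. y t \<in> carrier_vec n"
    and lim: "\<And>i. i < n \<Longrightarrow> (\<lambda>t. y t $ i) \<longlonglongrightarrow> 0"
  shows "(\<lambda>t. y t \<bullet> (P *\<^sub>v y t)) \<longlonglongrightarrow> 0"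
proof -
  have "y t \<bullet> (P *\<^sub>v y t) = (\<Sum>i\<in>{0..<n}. \<Sum>j\<in>{0..<n}. y t $ i * (P $$ (i,j) * y t $ j))" for t
    using P y[of t] by (simp add: scalar_prod_def sum_distrib_left)
  moreover have "(\<lambda>t. \<Sum>i\<in>{0..<n}. \<Sum>j\<in>{0..<n}. y t $ i * (P $$ (i,j) * y t $ j))
      \<longlonglongrightarrow> (\<Sum>i\<in>{0..<n}. \<Sum>j\<in>{0..<n}. 0 * (P $$ (i,j) * 0))"
    by (intro tendsto_sum tendsto_mult tendsto_const lim) auto
  ultimately show ?thesis by simp
qed

lemma transpose_sym_scalar_prod:
  fixes P :: "real mat"
  assumes P: "P \<in> carrier_mat n n" "transpose_mat P = P"
    and x: "x \<in> carrier_vec n" and z: "z \<in> carrier_vec n"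
  shows "x \<bullet> (P *\<^sub>v z) = z \<bullet> (P *\<^sub>v x)"
proof -
  have "x \<bullet> (P *\<^sub>v z) = (transpose_mat P *\<^sub>v x) \<bullet> z"
    using transpose_vec_mult_scalar[OF P(1) z x] by simp
  also have "\<dots> = z \<bullet> (P *\<^sub>v x)" using P x z by (simp add: comm_scalar_prod[of _ n])
  finally show ?thesis .
qed

lemma quadratic_form_add:
  fixes P :: "real mat"
  assumes P: "P \<in> carrier_mat n n" "transpose_mat P = P"
    and a: "a \<in> carrier_vec n" and b: "b \<in> carrier_vec n"
  shows "(a + b) \<bullet> (P *\<^sub>v (a + b)) = a \<bullet> (P *\<^sub>v a) + 2 * (b \<bullet> (P *\<^sub>v a)) + b \<bullet> (P *\<^sub>v b)"
proof -
  have "(a + b) \<bullet> (P *\<^sub>v (a + b)) = a \<bullet> (P *\<^sub>v a) + a \<bullet> (P *\<^sub>v b) + (b \<bullet> (P *\<^sub>v a) + b \<bullet> (P *\<^sub>v b))"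
    using P a b by (simp add: mult_add_distrib_mat_vec[of P n n] add_scalar_prod_distrib[of a n]
        scalar_prod_add_distrib[of _ n])
  then show ?thesis using transpose_sym_scalar_prod[OF P a b] by simp
qed

lemma mult_mat_vec_index_cong:
  assumes "A \<in> carrier_mat m n" "A' \<in> carrier_mat m n" "v \<in> carrier_vec n" "v' \<in> carrier_vec n" "i < m"
    and "\<And>j. j < n \<Longrightarrow> A $$ (i,j) * v $ j = A' $$ (i,j) * v' $ j"
  shows "(A *\<^sub>v v) $ i = (A' *\<^sub>v v') $ i"
proof -
  have "(A *\<^sub>v v) $ i = (\<Sum>j = 0..<n. A $$ (i,j) * v $ j)" using assms by (simp add: scalar_prod_def)
  also have "\<dots> = (\<Sum>j = 0..<n. A' $$ (i,j) * v' $ j)" using assms(6) by (intro sum.cong) auto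
  also have "\<dots> = (A' *\<^sub>v v') $ i" using assms by (simp add: scalar_prod_def)
  finally show ?thesis .
qed

lemma mat_eq_if_mult_mat_vec_eq:
  fixes K K' :: "real mat"
  assumes K: "K \<in> carrier_mat k n" and K': "K' \<in> carrier_mat k n"
    and eq: "\<And>x. x \<in> carrier_vec n \<Longrightarrow> K *\<^sub>v x = K' *\<^sub>v x"
  shows "K = K'"
proof (rule eq_matI)
  fix i j assume "i < dim_row K'" "j < dim_col K'"
  then have "K $$ (i,j) = (K *\<^sub>v unit_vec n j) $ i" using K K' by (simp add: scalar_prod_right_unit)
  also have "\<dots> = (K' *\<^sub>v unit_vec n j) $ i" using eq[of "unit_vec n j"] by simp
  also have "\<dots> = K' $$ (i,j)"
    using K' \<open>i < dim_row K'\<close> \<open>j < dim_col K'\<close> by (simp add: scalar_prod_right_unit)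
  finally show "K $$ (i,j) = K' $$ (i,j)" .
qed (use K K' in auto)

lemma scalar_prod_mat_suminf:
  fixes W :: "nat \<Rightarrow> real mat"
  assumes W: "\<And>t. W t \<in> carrier_mat n n"
    and summable: "\<And>i j. i < n \<Longrightarrow> j < n \<Longrightarrow> summable (\<lambda>t. W t $$ (i,j))"
    and x: "x \<in> carrier_vec n" and z: "z \<in> carrier_vec n"
  shows "x \<bullet> (mat n n (\<lambda>(i,j). \<Sum>t. W t $$ (i,j)) *\<^sub>v z) = (\<Sum>t. x \<bullet> (W t *\<^sub>v z))"
proof -
  have expand: "x \<bullet> (W t *\<^sub>v z) = (\<Sum>i = 0..<n. \<Sum>j = 0..<n. x $ i * (z $ j * W t $$ (i,j)))" for t
    using W[of t] x z by (simp add: scalar_prod_def sum_distrib_left ac_simps)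
  have "x \<bullet> (mat n n (\<lambda>(i,j). \<Sum>t. W t $$ (i,j)) *\<^sub>v z)
      = (\<Sum>i = 0..<n. \<Sum>j = 0..<n. x $ i * (z $ j * (\<Sum>t. W t $$ (i,j))))"
    using x z by (simp add: scalar_prod_def sum_distrib_left ac_simps)
  also have "\<dots> = (\<Sum>i = 0..<n. \<Sum>j = 0..<n. \<Sum>t. x $ i * (z $ j * W t $$ (i,j)))"
    by (intro sum.cong refl) (simp add: suminf_mult summable)
  also have "\<dots> = (\<Sum>i = 0..<n. \<Sum>t. \<Sum>j = 0..<n. x $ i * (z $ j * W t $$ (i,j)))"
    by (intro sum.cong refl suminf_sum[symmetric] summable_mult summable) auto
  also have "\<dots> = (\<Sum>t. \<Sum>i = 0..<n. \<Sum>j = 0..<n. x $ i * (z $ j * W t $$ (i,j)))"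
    by (intro suminf_sum[symmetric] summable_sum summable_mult summable) auto
  finally show ?thesis unfolding expand .
qed

definition stage_form :: "real mat \<Rightarrow> real vec \<Rightarrow> real vec \<Rightarrow> real" where
  "stage_form K a b = a \<bullet> b + (K *\<^sub>v a) \<bullet> (K *\<^sub>v b)"

lemma stage_form_nonneg: "0 \<le> stage_form K y y"
  unfolding stage_form_def using scalar_prod_self_nonneg[of y] scalar_prod_self_nonneg[of "K *\<^sub>v y"]
  by linarith

lemma stage_form_commute:
  "a \<in> carrier_vec n \<Longrightarrow> b \<in> carrier_vec n \<Longrightarrow> K \<in> carrier_mat k n \<Longrightarrow> stage_form K a b = stage_form K b a"
  unfolding stage_form_def by (simp add: comm_scalar_prod[of a n b] comm_scalar_prod[of "K *\<^sub>v a" k])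

lemma gram_stage_form:
  fixes N K :: "real mat"
  assumes N: "N \<in> carrier_mat n n" and K: "K \<in> carrier_mat k n"
    and x: "x \<in> carrier_vec n" and z: "z \<in> carrier_vec n"
  shows "x \<bullet> ((transpose_mat N * N + transpose_mat (K * N) * (K * N)) *\<^sub>v z)
    = stage_form K (N *\<^sub>v x) (N *\<^sub>v z)"
proof -
  have KN: "K * N \<in> carrier_mat k n" using K N by auto
  have "(transpose_mat N * N + transpose_mat (K * N) * (K * N)) *\<^sub>v z
      = transpose_mat N *\<^sub>v (N *\<^sub>v z) + transpose_mat (K * N) *\<^sub>v ((K * N) *\<^sub>v z)"
    using N KN z by (simp add: add_mult_distrib_mat_vec[of _ n n] assoc_mult_mat_vec[of _ n n _ n])
  then have "x \<bullet> ((transpose_mat N * N + transpose_mat (K * N) * (K * N)) *\<^sub>v z)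
      = x \<bullet> (transpose_mat N *\<^sub>v (N *\<^sub>v z)) + x \<bullet> (transpose_mat (K * N) *\<^sub>v ((K * N) *\<^sub>v z))"
    using x z N KN by (simp add: scalar_prod_add_distrib[of x n])
  also have "x \<bullet> (transpose_mat N *\<^sub>v (N *\<^sub>v z)) = (N *\<^sub>v x) \<bullet> (N *\<^sub>v z)"
    using x z N
    by (simp add: comm_scalar_prod[of x n] transpose_vec_mult_scalar[of _ n n]
        comm_scalar_prod[of "N *\<^sub>v z" n])
  also have "x \<bullet> (transpose_mat (K * N) *\<^sub>v ((K * N) *\<^sub>v z)) = ((K * N) *\<^sub>v z) \<bullet> ((K * N) *\<^sub>v x)"
    using x z KN by (simp add: comm_scalar_prod[of x n] transpose_vec_mult_scalar[of _ k n])
  also have "\<dots> = (K *\<^sub>v (N *\<^sub>v x)) \<bullet> (K *\<^sub>v (N *\<^sub>v z))"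
    using x z N K by (simp add: comm_scalar_prod[of _ k] assoc_mult_mat_vec[of _ k n _ n])
  finally show ?thesis unfolding stage_form_def .
qed

lemma geometric_decay_stage_form:
  assumes K: "K \<in> carrier_mat k n" and y: "geometric_decay_vec n y" and z: "geometric_decay_vec n z"
  shows "geometric_decay (\<lambda>t. stage_form K (y t) (z t))"
  unfolding stage_form_def
  by (intro geometric_decay_add geometric_decay_scalar_prod[OF y z]
      geometric_decay_scalar_prod[OF geometric_decay_vec_mult_mat_vec[OF K y]
        geometric_decay_vec_mult_mat_vec[OF K z]])

section \<open>Linear-quadratic systems\<close>

definition value_matrix :: "real mat \<Rightarrow> real mat \<Rightarrow> real mat \<Rightarrow> real mat \<Rightarrow> bool" where
  "value_matrix A B K P \<longleftrightarrow> P \<in> carrier_mat (dim_row A) (dim_row A) \<and> transpose_mat P = P \<and>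
     (\<forall>x \<in> carrier_vec (dim_row A). lq_cost A B (1\<^sub>m (dim_row A)) K x = x \<bullet> (P *\<^sub>v x))"

text \<open>The first-order condition for minimising \<open>u \<bullet> u + q (A x + B u)\<close> at \<open>u = K x\<close>, where
  \<open>q y = y \<bullet> (P y)\<close>; it is equivalent to \<open>(I + B\<^sup>T P B) K = - B\<^sup>T P A\<close>.\<close>

definition greedy_gain :: "real mat \<Rightarrow> real mat \<Rightarrow> real mat \<Rightarrow> real mat \<Rightarrow> bool" where
  "greedy_gain A B P K \<longleftrightarrow> K \<in> carrier_mat (dim_col B) (dim_row A) \<and>
     (\<forall>x \<in> carrier_vec (dim_row A). \<forall>v \<in> carrier_vec (dim_col B).
        v \<bullet> (K *\<^sub>v x) + (B *\<^sub>v v) \<bullet> (P *\<^sub>v (A *\<^sub>v x + B *\<^sub>v (K *\<^sub>v x))) = 0)"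

definition deviation_cost :: "real mat \<Rightarrow> real mat \<Rightarrow> real vec \<Rightarrow> real" where
  "deviation_cost B P v = v \<bullet> v + (B *\<^sub>v v) \<bullet> (P *\<^sub>v (B *\<^sub>v v))"

locale lq_system =
  fixes A B :: "real mat" and n k :: nat
  assumes A_carrier: "A \<in> carrier_mat n n" and B_carrier: "B \<in> carrier_mat n k"
begin

lemma stabilizing_carrier: "stabilizing A B K \<Longrightarrow> K \<in> carrier_mat k n"
  using A_carrier B_carrier unfolding stabilizing_def by auto

lemma closed_loop_carrier: "K \<in> carrier_mat k n \<Longrightarrow> closed_loop A B K \<in> carrier_mat n n"
  using A_carrier B_carrier unfolding closed_loop_def by auto

lemma closed_loop_pow_carrier:
  "K \<in> carrier_mat k n \<Longrightarrow> x \<in> carrier_vec n \<Longrightarrow> closed_loop A B K ^\<^sub>m t *\<^sub>v x \<in> carrier_vec n"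
  by (rule pow_mat_mult_vec_carrier[OF closed_loop_carrier])

lemma closed_loop_pow_0: "x \<in> carrier_vec n \<Longrightarrow> closed_loop A B K ^\<^sub>m 0 *\<^sub>v x = x"
  using A_carrier B_carrier by (simp add: closed_loop_def)

lemma closed_loop_pow_Suc:
  assumes K: "K \<in> carrier_mat k n" and x: "x \<in> carrier_vec n"
  shows "closed_loop A B K ^\<^sub>m Suc t *\<^sub>v x
    = A *\<^sub>v (closed_loop A B K ^\<^sub>m t *\<^sub>v x) + B *\<^sub>v (K *\<^sub>v (closed_loop A B K ^\<^sub>m t *\<^sub>v x))"
proof -
  define y where "y = closed_loop A B K ^\<^sub>m t *\<^sub>v x"
  have y: "y \<in> carrier_vec n" unfolding y_def using closed_loop_pow_carrier[OF K x] .
  have "closed_loop A B K ^\<^sub>m Suc t *\<^sub>v x = (A + B * K) *\<^sub>v y"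
    unfolding y_def closed_loop_def[symmetric]
    by (rule pow_mat_Suc_mult_mat_vec[OF closed_loop_carrier[OF K] x])
  also have "\<dots> = A *\<^sub>v y + B *\<^sub>v (K *\<^sub>v y)"
    using A_carrier B_carrier K y by (simp add: add_mult_distrib_mat_vec assoc_mult_mat_vec[of _ n k _ n])
  finally show ?thesis unfolding y_def .
qed

lemma stabilizing_geometric_decay_vec:
  assumes "stabilizing A B K" "x \<in> carrier_vec n"
  shows "geometric_decay_vec n (\<lambda>t. closed_loop A B K ^\<^sub>m t *\<^sub>v x)"
  using assms stabilizing_carrier[OF assms(1)]
  by (intro spectral_radius_less_1_geometric_decay closed_loop_carrier) (auto simp: stabilizing_def)

lemma stabilizingI:
  assumes K: "K \<in> carrier_mat k n" and n: "0 < n"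
    and lim: "\<And>x i. x \<in> carrier_vec n \<Longrightarrow> i < n \<Longrightarrow> (\<lambda>t. (closed_loop A B K ^\<^sub>m t *\<^sub>v x) $ i) \<longlonglongrightarrow> 0"
  shows "stabilizing A B K"
  unfolding stabilizing_def
  using K A_carrier B_carrier spectral_radius_less_1_if_LIMSEQ[OF closed_loop_carrier[OF K] n lim] by auto

lemma lq_cost_one_mat:
  "x \<in> carrier_vec n \<Longrightarrow> K \<in> carrier_mat k n \<Longrightarrow>
   lq_cost A B (1\<^sub>m n) K x
     = (\<Sum>t. stage_form K (closed_loop A B K ^\<^sub>m t *\<^sub>v x) (closed_loop A B K ^\<^sub>m t *\<^sub>v x))"
  unfolding lq_cost_def stage_form_def Let_def using closed_loop_pow_carrier by simp

lemma summable_stage_form: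
  assumes "stabilizing A B K" "x \<in> carrier_vec n"
  shows "summable (\<lambda>t. stage_form K (closed_loop A B K ^\<^sub>m t *\<^sub>v x) (closed_loop A B K ^\<^sub>m t *\<^sub>v x))"
  using geometric_decay_stage_form[OF stabilizing_carrier[OF assms(1)]
      stabilizing_geometric_decay_vec[OF assms] stabilizing_geometric_decay_vec[OF assms]]
  by (rule geometric_decay_summable)

lemma lq_cost_nonneg: "stabilizing A B K \<Longrightarrow> x \<in> carrier_vec n \<Longrightarrow> 0 \<le> lq_cost A B (1\<^sub>m n) K x"
  by (simp add: lq_cost_one_mat stabilizing_carrier suminf_nonneg summable_stage_form stage_form_nonneg)

lemma lq_cost_bellman:
  assumes K: "stabilizing A B K" and x: "x \<in> carrier_vec n"
  shows "lq_cost A B (1\<^sub>m n) K x = stage_form K x x + lq_cost A B (1\<^sub>m n) K (A *\<^sub>v x + B *\<^sub>v (K *\<^sub>v x))"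
proof -
  note Kc = stabilizing_carrier[OF K]
  define M where "M = closed_loop A B K"
  have M: "M \<in> carrier_mat n n" unfolding M_def using closed_loop_carrier[OF Kc] .
  have Mx: "M *\<^sub>v x = A *\<^sub>v x + B *\<^sub>v (K *\<^sub>v x)" and Mx_carrier: "M *\<^sub>v x \<in> carrier_vec n"
    using closed_loop_pow_Suc[OF Kc x, of 0] M x Kc A_carrier B_carrier unfolding M_def by auto
  have shift: "M ^\<^sub>m Suc t *\<^sub>v x = M ^\<^sub>m t *\<^sub>v (M *\<^sub>v x)" for t
    using M x by (simp add: assoc_mult_mat_vec[of _ n n _ n])
  have "lq_cost A B (1\<^sub>m n) K x
      = stage_form K x x + (\<Sum>t. stage_form K (M ^\<^sub>m Suc t *\<^sub>v x) (M ^\<^sub>m Suc t *\<^sub>v x))"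
    unfolding lq_cost_one_mat[OF x Kc] M_def[symmetric]
    using suminf_split_head[OF summable_stage_form[OF K x, folded M_def]] x M by simp
  then show ?thesis unfolding shift using lq_cost_one_mat[OF Mx_carrier Kc] Mx M_def by simp
qed

lemma value_matrix_exists:
  assumes K: "stabilizing A B K"
  obtains P where "value_matrix A B K P"
proof -
  note Kc = stabilizing_carrier[OF K]
  define N where "N t = closed_loop A B K ^\<^sub>m t" for t
  have N: "N t \<in> carrier_mat n n" for t unfolding N_def using closed_loop_carrier[OF Kc] by simp
  define W where "W t = transpose_mat (N t) * N t + transpose_mat (K * N t) * (K * N t)" for t
  have W: "W t \<in> carrier_mat n n" for t unfolding W_def using N[of t] Kc by auto
  have W_form: "x \<bullet> (W t *\<^sub>v z) = stage_form K (N t *\<^sub>v x) (N t *\<^sub>v z)"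
    if "x \<in> carrier_vec n" "z \<in> carrier_vec n" for x z t
    unfolding W_def by (rule gram_stage_form[OF N Kc that])
  have W_entry: "W t $$ (i,j) = stage_form K (N t *\<^sub>v unit_vec n i) (N t *\<^sub>v unit_vec n j)"
    if "i < n" "j < n" for i j t
    using W_form[of "unit_vec n i" "unit_vec n j" t] W[of t] that
    by (simp add: scalar_prod_left_unit scalar_prod_right_unit)
  have decay: "geometric_decay (\<lambda>t. stage_form K (N t *\<^sub>v x) (N t *\<^sub>v z))"
    if "x \<in> carrier_vec n" "z \<in> carrier_vec n" for x z
    unfolding N_def using stabilizing_geometric_decay_vec[OF K] that
    by (intro geometric_decay_stage_form[OF Kc]) auto
  define P where "P = mat n n (\<lambda>(i,j). \<Sum>t. W t $$ (i,j))"
  have P_form: "x \<bullet> (P *\<^sub>v z) = (\<Sum>t. stage_form K (N t *\<^sub>v x) (N t *\<^sub>v z))"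
    if "x \<in> carrier_vec n" "z \<in> carrier_vec n" for x z
    unfolding P_def W_form[OF that, symmetric]
    using geometric_decay_summable[OF decay] W_entry by (intro scalar_prod_mat_suminf W that) auto
  have "transpose_mat P = P"
  proof (rule eq_matI)
    fix i j assume "i < dim_row P" "j < dim_col P"
    then have ij: "i < n" "j < n" unfolding P_def by auto
    have "W t $$ (j,i) = W t $$ (i,j)" for t
      using W_entry[OF ij] W_entry[OF ij(2,1)] N[of t] ij
      by (metis stage_form_commute[OF _ _ Kc] mult_mat_vec_carrier unit_vec_carrier)
    then show "transpose_mat P $$ (i,j) = P $$ (i,j)" using ij unfolding P_def by simp
  qed (auto simp: P_def)
  moreover have "lq_cost A B (1\<^sub>m n) K x = x \<bullet> (P *\<^sub>v x)" if "x \<in> carrier_vec n" for x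
    unfolding P_form[OF that that] lq_cost_one_mat[OF that Kc] N_def ..
  ultimately have "value_matrix A B K P"
    unfolding value_matrix_def P_def using A_carrier by auto
  then show ?thesis using that by blast
qed

lemma value_matrixD:
  assumes "value_matrix A B K P"
  shows "P \<in> carrier_mat n n" "transpose_mat P = P"
    "\<And>x. x \<in> carrier_vec n \<Longrightarrow> lq_cost A B (1\<^sub>m n) K x = x \<bullet> (P *\<^sub>v x)"
  using assms A_carrier unfolding value_matrix_def by auto

lemma value_matrix_nonneg:
  assumes "stabilizing A B K" "value_matrix A B K P" "y \<in> carrier_vec n"
  shows "0 \<le> y \<bullet> (P *\<^sub>v y)"
  using lq_cost_nonneg[OF assms(1,3)] value_matrixD(3)[OF assms(2,3)] by simp

lemma value_matrix_bellman:
  assumes K: "stabilizing A B K" and P: "value_matrix A B K P" and y: "y \<in> carrier_vec n"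
  shows "y \<bullet> (P *\<^sub>v y)
    = stage_form K y y + (A *\<^sub>v y + B *\<^sub>v (K *\<^sub>v y)) \<bullet> (P *\<^sub>v (A *\<^sub>v y + B *\<^sub>v (K *\<^sub>v y)))"
proof -
  have "A *\<^sub>v y + B *\<^sub>v (K *\<^sub>v y) \<in> carrier_vec n"
    using A_carrier B_carrier stabilizing_carrier[OF K] y by auto
  then show ?thesis using lq_cost_bellman[OF K y] value_matrixD(3)[OF P] y by simp
qed

end

section \<open>Greedy gains and optimality\<close>

context lq_system
begin

lemma greedy_gainD:
  assumes "greedy_gain A B P K"
  shows "K \<in> carrier_mat k n"
    and "\<And>x v. x \<in> carrier_vec n \<Longrightarrow> v \<in> carrier_vec k \<Longrightarrow>
      v \<bullet> (K *\<^sub>v x) + (B *\<^sub>v v) \<bullet> (P *\<^sub>v (A *\<^sub>v x + B *\<^sub>v (K *\<^sub>v x))) = 0"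
  using assms A_carrier B_carrier unfolding greedy_gain_def by auto

lemma regularized_gram_scalar_prod:
  assumes P: "P \<in> carrier_mat n n" and v: "v \<in> carrier_vec k" and w: "w \<in> carrier_vec k"
  shows "v \<bullet> ((1\<^sub>m k + transpose_mat B * (P * B)) *\<^sub>v w) = v \<bullet> w + (B *\<^sub>v v) \<bullet> (P *\<^sub>v (B *\<^sub>v w))"
proof -
  have "(1\<^sub>m k + transpose_mat B * (P * B)) *\<^sub>v w = w + transpose_mat B *\<^sub>v (P *\<^sub>v (B *\<^sub>v w))"
    using B_carrier P w
    by (simp add: add_mult_distrib_mat_vec[of _ k k] assoc_mult_mat_vec[of _ k n _ k]
        assoc_mult_mat_vec[of _ n n _ k])
  then have "v \<bullet> ((1\<^sub>m k + transpose_mat B * (P * B)) *\<^sub>v w)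
      = v \<bullet> w + v \<bullet> (transpose_mat B *\<^sub>v (P *\<^sub>v (B *\<^sub>v w)))"
    using v w B_carrier P by (simp add: scalar_prod_add_distrib[of v k])
  also have "v \<bullet> (transpose_mat B *\<^sub>v (P *\<^sub>v (B *\<^sub>v w))) = (B *\<^sub>v v) \<bullet> (P *\<^sub>v (B *\<^sub>v w))"
    using v w B_carrier P
    by (simp add: comm_scalar_prod[of v k] transpose_vec_mult_scalar[of B n k] comm_scalar_prod[of _ n])
  finally show ?thesis .
qed

lemma regularized_gram_invertible:
  assumes P: "P \<in> carrier_mat n n" and nonneg: "\<And>y. y \<in> carrier_vec n \<Longrightarrow> 0 \<le> y \<bullet> (P *\<^sub>v y)"
  obtains Gi where "Gi \<in> carrier_mat k k" "(1\<^sub>m k + transpose_mat B * (P * B)) * Gi = 1\<^sub>m k"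
proof -
  define G where "G = 1\<^sub>m k + transpose_mat B * (P * B)"
  have G: "G \<in> carrier_mat k k" unfolding G_def using B_carrier P by auto
  have "det G \<noteq> 0"
  proof
    assume "det G = 0"
    then obtain v where v: "v \<in> carrier_vec k" "v \<noteq> 0\<^sub>v k" "G *\<^sub>v v = 0\<^sub>v k"
      using det_0_iff_vec_prod_zero[OF G] by auto
    then have "v \<bullet> v + (B *\<^sub>v v) \<bullet> (P *\<^sub>v (B *\<^sub>v v)) = 0"
      using regularized_gram_scalar_prod[OF P v(1) v(1)] unfolding G_def by simp
    moreover have "0 \<le> (B *\<^sub>v v) \<bullet> (P *\<^sub>v (B *\<^sub>v v))" using nonneg B_carrier v by auto
    ultimately have "v \<bullet> v = 0" using scalar_prod_self_nonneg[of v] by linarith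
    with v show False using scalar_prod_self_eq_0_iff by blast
  qed
  then show ?thesis
    using that det_non_zero_imp_unit[OF G, of undefined] unfolding G_def Units_def ring_mat_def by auto
qed

lemma greedy_gain_exists:
  assumes P: "P \<in> carrier_mat n n" and nonneg: "\<And>y. y \<in> carrier_vec n \<Longrightarrow> 0 \<le> y \<bullet> (P *\<^sub>v y)"
  obtains K where "greedy_gain A B P K"
proof -
  define G where "G = 1\<^sub>m k + transpose_mat B * (P * B)"
  have G: "G \<in> carrier_mat k k" unfolding G_def using B_carrier P by auto
  obtain Gi where Gi: "Gi \<in> carrier_mat k k" "G * Gi = 1\<^sub>m k"
    using regularized_gram_invertible[OF P nonneg] unfolding G_def by blast
  define L where "L = transpose_mat B * (P * A)"
  have L: "L \<in> carrier_mat k n" unfolding L_def using A_carrier B_carrier P by auto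
  define K where "K = Gi * (- L)"
  have K: "K \<in> carrier_mat k n" unfolding K_def using Gi L by auto
  have "v \<bullet> (K *\<^sub>v x) + (B *\<^sub>v v) \<bullet> (P *\<^sub>v (A *\<^sub>v x + B *\<^sub>v (K *\<^sub>v x))) = 0"
    if x: "x \<in> carrier_vec n" and v: "v \<in> carrier_vec k" for x v
  proof -
    have Kx: "K *\<^sub>v x \<in> carrier_vec k" using K x by auto
    have Lx: "(- L) *\<^sub>v x \<in> carrier_vec k" using L x by auto
    have "G *\<^sub>v (K *\<^sub>v x) = G *\<^sub>v (Gi *\<^sub>v ((- L) *\<^sub>v x))"
      unfolding K_def using Gi L x by (subst assoc_mult_mat_vec) auto
    also have "\<dots> = (G * Gi) *\<^sub>v ((- L) *\<^sub>v x)" using G Gi Lx by (subst assoc_mult_mat_vec) auto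
    also have "\<dots> = - (L *\<^sub>v x)" using Gi(2) Lx L x by simp
    finally have GK: "G *\<^sub>v (K *\<^sub>v x) = - (L *\<^sub>v x)" .
    have "(B *\<^sub>v v) \<bullet> (P *\<^sub>v (A *\<^sub>v x + B *\<^sub>v (K *\<^sub>v x)))
        = (B *\<^sub>v v) \<bullet> (P *\<^sub>v (A *\<^sub>v x)) + (B *\<^sub>v v) \<bullet> (P *\<^sub>v (B *\<^sub>v (K *\<^sub>v x)))"
      using A_carrier B_carrier P x v Kx
      by (simp add: mult_add_distrib_mat_vec[of P n n] scalar_prod_add_distrib[of _ n])
    also have "(B *\<^sub>v v) \<bullet> (P *\<^sub>v (A *\<^sub>v x)) = v \<bullet> (L *\<^sub>v x)"
      unfolding L_def using A_carrier B_carrier P x v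
      by (simp add: comm_scalar_prod[of v k] transpose_vec_mult_scalar[of B n k] comm_scalar_prod[of _ n]
          assoc_mult_mat_vec[of _ k n _ n] assoc_mult_mat_vec[of _ n n _ n])
    finally have "v \<bullet> (K *\<^sub>v x) + (B *\<^sub>v v) \<bullet> (P *\<^sub>v (A *\<^sub>v x + B *\<^sub>v (K *\<^sub>v x)))
        = v \<bullet> (G *\<^sub>v (K *\<^sub>v x)) + v \<bullet> (L *\<^sub>v x)"
      using regularized_gram_scalar_prod[OF P v Kx] unfolding G_def by simp
    also have "\<dots> = 0" unfolding GK using v L x by (simp add: scalar_prod_uminus_right)
    finally show ?thesis .
  qed
  then have "greedy_gain A B P K" unfolding greedy_gain_def using K A_carrier B_carrier by auto
  then show ?thesis using that by blast
qed

lemma greedy_gain_completion: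
  assumes P: "P \<in> carrier_mat n n" "transpose_mat P = P" and G: "greedy_gain A B P K"
    and x: "x \<in> carrier_vec n" and z: "z \<in> carrier_vec k"
  shows "z \<bullet> z + (A *\<^sub>v x + B *\<^sub>v z) \<bullet> (P *\<^sub>v (A *\<^sub>v x + B *\<^sub>v z))
    = (K *\<^sub>v x) \<bullet> (K *\<^sub>v x) + (A *\<^sub>v x + B *\<^sub>v (K *\<^sub>v x)) \<bullet> (P *\<^sub>v (A *\<^sub>v x + B *\<^sub>v (K *\<^sub>v x)))
      + deviation_cost B P (z - K *\<^sub>v x)"
proof -
  define w where "w = K *\<^sub>v x"
  define v where "v = z - w"
  define a where "a = A *\<^sub>v x + B *\<^sub>v w"
  have w: "w \<in> carrier_vec k" unfolding w_def using greedy_gainD(1)[OF G] x by auto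
  have v: "v \<in> carrier_vec k" unfolding v_def using w z by auto
  have a: "a \<in> carrier_vec n" unfolding a_def using A_carrier B_carrier x w by auto
  have Bv: "B *\<^sub>v v \<in> carrier_vec n" using B_carrier v by auto
  have z_eq: "z = w + v" unfolding v_def using w z by auto
  have next_eq: "A *\<^sub>v x + B *\<^sub>v z = a + B *\<^sub>v v"
    unfolding a_def z_eq using A_carrier B_carrier x w v
    by (simp add: mult_add_distrib_mat_vec[of B n k] assoc_add_vec[of _ n])
  have "v \<bullet> w + (B *\<^sub>v v) \<bullet> (P *\<^sub>v a) = 0"
    using greedy_gainD(2)[OF G x v] unfolding a_def w_def .
  moreover have "z \<bullet> z = w \<bullet> w + 2 * (v \<bullet> w) + v \<bullet> v"
    using quadratic_form_add[of "1\<^sub>m k" k w v] w v z_eq by simp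
  moreover have "(A *\<^sub>v x + B *\<^sub>v z) \<bullet> (P *\<^sub>v (A *\<^sub>v x + B *\<^sub>v z))
      = a \<bullet> (P *\<^sub>v a) + 2 * ((B *\<^sub>v v) \<bullet> (P *\<^sub>v a)) + (B *\<^sub>v v) \<bullet> (P *\<^sub>v (B *\<^sub>v v))"
    unfolding next_eq by (rule quadratic_form_add[OF P a Bv])
  ultimately show ?thesis
    unfolding deviation_cost_def v_def[symmetric] w_def[symmetric] a_def[symmetric] by linarith
qed

lemma deviation_cost_ge:
  assumes "stabilizing A B K" "value_matrix A B K P" "v \<in> carrier_vec k"
  shows "v \<bullet> v \<le> deviation_cost B P v"
  using value_matrix_nonneg[OF assms(1,2), of "B *\<^sub>v v"] assms(3) B_carrier
  unfolding deviation_cost_def by auto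

lemma deviation_cost_zero: "P \<in> carrier_mat n n \<Longrightarrow> deviation_cost B P (0\<^sub>v k) = 0"
proof -
  have "B *\<^sub>v 0\<^sub>v k = 0\<^sub>v n" using B_carrier by (intro eq_vecI) (auto simp: scalar_prod_def)
  then show "P \<in> carrier_mat n n \<Longrightarrow> deviation_cost B P (0\<^sub>v k) = 0"
    unfolding deviation_cost_def by simp
qed

lemma bellman_step:
  assumes K: "stabilizing A B K" and P: "value_matrix A B K P" and G: "greedy_gain A B P K'"
    and y: "y \<in> carrier_vec n" and u: "u \<in> carrier_vec k"
  shows "y \<bullet> (P *\<^sub>v y) + deviation_cost B P (u - K' *\<^sub>v y)
    = y \<bullet> y + u \<bullet> u + (A *\<^sub>v y + B *\<^sub>v u) \<bullet> (P *\<^sub>v (A *\<^sub>v y + B *\<^sub>v u))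
      + deviation_cost B P (K *\<^sub>v y - K' *\<^sub>v y)"
proof -
  have Ky: "K *\<^sub>v y \<in> carrier_vec k" using stabilizing_carrier[OF K] y by auto
  show ?thesis
    using value_matrix_bellman[OF K P y] greedy_gain_completion[OF value_matrixD(1,2)[OF P] G y u]
      greedy_gain_completion[OF value_matrixD(1,2)[OF P] G y Ky]
    unfolding stage_form_def by linarith
qed

lemma greedy_gain_stabilizing:
  assumes n: "0 < n" and K: "stabilizing A B K" and P: "value_matrix A B K P"
    and G: "greedy_gain A B P K'"
  shows "stabilizing A B K'"
proof (rule stabilizingI[OF greedy_gainD(1)[OF G] n])
  fix x :: "real vec" and i assume x: "x \<in> carrier_vec n" and i: "i < n"
  define y where "y t = closed_loop A B K' ^\<^sub>m t *\<^sub>v x" for t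
  have y: "y t \<in> carrier_vec n" for t
    unfolding y_def using closed_loop_pow_carrier[OF greedy_gainD(1)[OF G] x] .
  have decrease: "y t \<bullet> y t + y (Suc t) \<bullet> (P *\<^sub>v y (Suc t)) \<le> y t \<bullet> (P *\<^sub>v y t)" for t
  proof -
    have K'y: "K' *\<^sub>v y t \<in> carrier_vec k" using greedy_gainD(1)[OF G] y by auto
    have "y (Suc t) = A *\<^sub>v y t + B *\<^sub>v (K' *\<^sub>v y t)"
      unfolding y_def by (rule closed_loop_pow_Suc[OF greedy_gainD(1)[OF G] x])
    moreover have "0 \<le> deviation_cost B P (K *\<^sub>v y t - K' *\<^sub>v y t)"
      using deviation_cost_ge[OF K P, of "K *\<^sub>v y t - K' *\<^sub>v y t"] stabilizing_carrier[OF K] y K'y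
        scalar_prod_self_nonneg[of "K *\<^sub>v y t - K' *\<^sub>v y t"] by fastforce
    ultimately show ?thesis
      using bellman_step[OF K P G y[of t] K'y] deviation_cost_zero[OF value_matrixD(1)[OF P]]
        minus_cancel_vec[OF K'y] scalar_prod_self_nonneg[of "K' *\<^sub>v y t"] by simp
  qed
  have partial: "(\<Sum>t<N. y t \<bullet> y t) + y N \<bullet> (P *\<^sub>v y N) \<le> y 0 \<bullet> (P *\<^sub>v y 0)" for N
    by (induction N) (use decrease in \<open>auto intro: order.trans[rotated]\<close>)
  have y0: "y 0 = x" unfolding y_def by (rule closed_loop_pow_0[OF x])
  have "(\<Sum>t<N. y t \<bullet> y t) \<le> x \<bullet> (P *\<^sub>v x)" for N
    using partial[of N, unfolded y0] value_matrix_nonneg[OF K P y[of N]] by linarith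
  then have "summable (\<lambda>t. y t \<bullet> y t)"
    by (intro summableI_nonneg_bounded[OF scalar_prod_self_nonneg])
  then have "(\<lambda>t. y t \<bullet> y t) \<longlonglongrightarrow> 0" by (rule summable_LIMSEQ_zero)
  then show "(\<lambda>t. (closed_loop A B K' ^\<^sub>m t *\<^sub>v x) $ i) \<longlonglongrightarrow> 0"
    using LIMSEQ_index_if_scalar_prod_self[of y, OF y _ i] unfolding y_def by blast
qed

lemma lq_cost_greedy_le:
  assumes n: "0 < n" and K: "stabilizing A B K" and P: "value_matrix A B K P"
    and G: "greedy_gain A B P K'" and x: "x \<in> carrier_vec n"
  shows "lq_cost A B (1\<^sub>m n) K' x + deviation_cost B P (K *\<^sub>v x - K' *\<^sub>v x) \<le> x \<bullet> (P *\<^sub>v x)"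
proof -
  have K': "stabilizing A B K'" by (rule greedy_gain_stabilizing[OF n K P G])
  note K'_carrier = greedy_gainD(1)[OF G]
  define y where "y t = closed_loop A B K' ^\<^sub>m t *\<^sub>v x" for t
  define q where "q t = y t \<bullet> (P *\<^sub>v y t)" for t
  define e where "e t = deviation_cost B P (K *\<^sub>v y t - K' *\<^sub>v y t)" for t
  have y: "geometric_decay_vec n y" unfolding y_def by (rule stabilizing_geometric_decay_vec[OF K' x])
  note y_carrier = geometric_decay_vec_carrier[OF y]
  have "q t - q (Suc t) = stage_form K' (y t) (y t) + e t" for t
  proof -
    have K'y: "K' *\<^sub>v y t \<in> carrier_vec k" using K'_carrier y_carrier by auto
    have "y (Suc t) = A *\<^sub>v y t + B *\<^sub>v (K' *\<^sub>v y t)"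
      unfolding y_def by (rule closed_loop_pow_Suc[OF K'_carrier x])
    then show ?thesis
      using bellman_step[OF K P G y_carrier[of t] K'y] deviation_cost_zero[OF value_matrixD(1)[OF P]]
        minus_cancel_vec[OF K'y] unfolding q_def e_def stage_form_def by simp
  qed
  moreover have "(\<lambda>t. q t - q (Suc t)) sums (q 0 - 0)"
    using quadratic_form_LIMSEQ[OF value_matrixD(1)[OF P] y_carrier geometric_decay_vec_LIMSEQ[OF y]]
    unfolding q_def by (rule telescope_sums')
  moreover have "(\<lambda>t. stage_form K' (y t) (y t)) sums lq_cost A B (1\<^sub>m n) K' x"
    unfolding y_def lq_cost_one_mat[OF x K'_carrier]
    using summable_stage_form[OF K' x] by (rule summable_sums)
  ultimately have "e sums (q 0 - lq_cost A B (1\<^sub>m n) K' x)"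
    using sums_diff by fastforce
  moreover have "0 \<le> e t" for t
  proof -
    have "K *\<^sub>v y t - K' *\<^sub>v y t \<in> carrier_vec k"
      using stabilizing_carrier[OF K] K'_carrier y_carrier[of t] by auto
    then show ?thesis
      using deviation_cost_ge[OF K P] scalar_prod_self_nonneg unfolding e_def by (meson order.trans)
  qed
  ultimately have "e 0 \<le> q 0 - lq_cost A B (1\<^sub>m n) K' x" by (rule sums_head_le)
  moreover have "y 0 = x" unfolding y_def using closed_loop_pow_0[OF x] .
  ultimately show ?thesis unfolding e_def q_def by simp
qed

lemma optimal_gain_imp_greedy:
  assumes n: "0 < n" and opt: "optimal_gain A B (1\<^sub>m n) K"
  obtains P where "value_matrix A B K P" "greedy_gain A B P K"
proof -
  have K: "stabilizing A B K" using opt unfolding optimal_gain_def by blast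
  obtain P where P: "value_matrix A B K P" using value_matrix_exists[OF K] .
  obtain K' where G: "greedy_gain A B P K'"
    using greedy_gain_exists[OF value_matrixD(1)[OF P] value_matrix_nonneg[OF K P]] .
  have "K *\<^sub>v x = K' *\<^sub>v x" if x: "x \<in> carrier_vec n" for x
  proof -
    have diff: "K *\<^sub>v x - K' *\<^sub>v x \<in> carrier_vec k"
      using stabilizing_carrier[OF K] greedy_gainD(1)[OF G] x by auto
    have "lq_cost A B (1\<^sub>m n) K x \<le> lq_cost A B (1\<^sub>m n) K' x"
      using opt greedy_gain_stabilizing[OF n K P G] x A_carrier unfolding optimal_gain_def by auto
    then have "(K *\<^sub>v x - K' *\<^sub>v x) \<bullet> (K *\<^sub>v x - K' *\<^sub>v x) \<le> 0"
      using lq_cost_greedy_le[OF n K P G x] value_matrixD(3)[OF P x] deviation_cost_ge[OF K P diff]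
      by linarith
    then show ?thesis
      using stabilizing_carrier[OF K] greedy_gainD(1)[OF G] x
      by (intro eq_if_scalar_prod_self_diff_le_0[where n = k]) auto
  qed
  then have "K = K'"
    by (rule mat_eq_if_mult_mat_vec_eq[OF stabilizing_carrier[OF K] greedy_gainD(1)[OF G]])
  then show ?thesis using that P G by blast
qed

text \<open>Telescoping \<open>q (w t) - q (w (t + 1)) = stage cost - deviation cost\<close>, with \<open>q y = y \<bullet> (P y)\<close>,
  gives \<open>\<Sum> stage costs = q (w 0) + \<Sum> deviation costs\<close>.\<close>

lemma greedy_lower_bound:
  assumes K: "stabilizing A B K" and P: "value_matrix A B K P" and G: "greedy_gain A B P K"
    and w: "geometric_decay_vec n w" and u: "geometric_decay_vec k u"
    and step: "\<And>t. w (Suc t) = A *\<^sub>v w t + B *\<^sub>v u t"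
  shows "w 0 \<bullet> (P *\<^sub>v w 0) + (u 0 - K *\<^sub>v w 0) \<bullet> (u 0 - K *\<^sub>v w 0) \<le> (\<Sum>t. w t \<bullet> w t + u t \<bullet> u t)"
proof -
  define q where "q t = w t \<bullet> (P *\<^sub>v w t)" for t
  define e where "e t = deviation_cost B P (u t - K *\<^sub>v w t)" for t
  define h where "h t = w t \<bullet> w t + u t \<bullet> u t" for t
  note w_carrier = geometric_decay_vec_carrier[OF w] and u_carrier = geometric_decay_vec_carrier[OF u]
  have dev: "u t - K *\<^sub>v w t \<in> carrier_vec k" for t
    using u_carrier w_carrier stabilizing_carrier[OF K] by auto
  have "q t - q (Suc t) = h t - e t" for t
  proof -
    have "K *\<^sub>v w t - K *\<^sub>v w t = 0\<^sub>v k" using stabilizing_carrier[OF K] w_carrier[of t] by auto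
    then show ?thesis
      using bellman_step[OF K P G w_carrier[of t] u_carrier[of t]] step[of t]
        deviation_cost_zero[OF value_matrixD(1)[OF P]]
      unfolding q_def e_def h_def by simp
  qed
  moreover have "(\<lambda>t. q t - q (Suc t)) sums (q 0 - 0)"
    using quadratic_form_LIMSEQ[OF value_matrixD(1)[OF P] w_carrier geometric_decay_vec_LIMSEQ[OF w]]
    unfolding q_def by (rule telescope_sums')
  moreover have "h sums (\<Sum>t. h t)"
    unfolding h_def
    by (intro summable_sums geometric_decay_summable geometric_decay_add
        geometric_decay_scalar_prod[OF w w] geometric_decay_scalar_prod[OF u u])
  ultimately have "e sums ((\<Sum>t. h t) - q 0)"
    using sums_diff by fastforce
  moreover have "0 \<le> e t" for t
    using deviation_cost_ge[OF K P dev[of t]] scalar_prod_self_nonneg[of "u t - K *\<^sub>v w t"]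
    unfolding e_def by linarith
  ultimately have "e 0 \<le> (\<Sum>t. h t) - q 0" by (rule sums_head_le)
  then show ?thesis using deviation_cost_ge[OF K P dev, of 0] unfolding e_def q_def h_def by simp
qed

end

section \<open>Coordinates not driven by the input\<close>

lemma quadratic_form_cong_tail:
  fixes D :: "real mat"
  assumes D: "D \<in> carrier_mat n n" and supp: "\<And>i j. i < n \<Longrightarrow> j < n \<Longrightarrow> i < m \<or> j < m \<Longrightarrow> D $$ (i,j) = 0"
    and v: "v \<in> carrier_vec n" and v': "v' \<in> carrier_vec n"
    and agree: "\<And>i. m \<le> i \<Longrightarrow> i < n \<Longrightarrow> v $ i = v' $ i"
  shows "v \<bullet> (D *\<^sub>v v) = v' \<bullet> (D *\<^sub>v v')"
proof -
  have "v $ i * (D $$ (i,j) * v $ j) = v' $ i * (D $$ (i,j) * v' $ j)" if "i < n" "j < n" for i j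
    using supp[OF that] agree[of i] agree[of j] that by (cases "i < m \<or> j < m") auto
  then have "(\<Sum>i = 0..<n. \<Sum>j = 0..<n. v $ i * (D $$ (i,j) * v $ j))
      = (\<Sum>i = 0..<n. \<Sum>j = 0..<n. v' $ i * (D $$ (i,j) * v' $ j))"
    by (intro sum.cong refl) auto
  then show ?thesis using D v v' by (simp add: scalar_prod_def sum_distrib_left)
qed

context lq_system
begin

lemma trajectory_carrier:
  assumes "w 0 \<in> carrier_vec n" "\<And>t. u t \<in> carrier_vec k" "\<And>t. w (Suc t) = A *\<^sub>v w t + B *\<^sub>v u t"
  shows "w t \<in> carrier_vec n"
  using assms A_carrier B_carrier by (induction t) auto

lemma trajectory_uncontrolled:
  assumes A_low: "\<And>i j. m \<le> i \<Longrightarrow> i < n \<Longrightarrow> j < m \<Longrightarrow> A $$ (i,j) = 0"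
    and B_low: "\<And>i j. m \<le> i \<Longrightarrow> i < n \<Longrightarrow> j < k \<Longrightarrow> B $$ (i,j) = 0"
    and w0: "w 0 \<in> carrier_vec n" and u: "\<And>t. u t \<in> carrier_vec k"
    and step: "\<And>t. w (Suc t) = A *\<^sub>v w t + B *\<^sub>v u t"
  shows "m \<le> i \<Longrightarrow> i < n \<Longrightarrow> w t $ i = (A ^\<^sub>m t *\<^sub>v w 0) $ i"
proof (induction t arbitrary: i)
  case 0
  then show ?case using A_carrier w0 by simp
next
  case (Suc t)
  have w: "w t \<in> carrier_vec n" by (rule trajectory_carrier[OF w0 u step])
  have "(B *\<^sub>v u t) $ i = 0" using B_carrier u[of t] Suc.prems B_low by (simp add: scalar_prod_def)
  then have "w (Suc t) $ i = (A *\<^sub>v w t) $ i"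
    using step[of t] Suc.prems A_carrier B_carrier w u[of t] by simp
  also have "\<dots> = (A *\<^sub>v (A ^\<^sub>m t *\<^sub>v w 0)) $ i"
  proof (rule mult_mat_vec_index_cong[OF A_carrier A_carrier w])
    show "A ^\<^sub>m t *\<^sub>v w 0 \<in> carrier_vec n" using A_carrier w0 by (rule pow_mat_mult_vec_carrier)
    fix j assume "j < n"
    then show "A $$ (i,j) * w t $ j = A $$ (i,j) * (A ^\<^sub>m t *\<^sub>v w 0) $ j"
      using Suc A_low by (cases "j < m") auto
  qed (use Suc.prems in simp)
  also have "\<dots> = (A ^\<^sub>m Suc t *\<^sub>v w 0) $ i" using pow_mat_Suc_mult_mat_vec[OF A_carrier w0] by simp
  finally show ?case .
qed

lemma closed_loop_uncontrolled:
  assumes A_low: "\<And>i j. m \<le> i \<Longrightarrow> i < n \<Longrightarrow> j < m \<Longrightarrow> A $$ (i,j) = 0"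
    and B_low: "\<And>i j. m \<le> i \<Longrightarrow> i < n \<Longrightarrow> j < k \<Longrightarrow> B $$ (i,j) = 0"
    and K: "K \<in> carrier_mat k n" and x: "x \<in> carrier_vec n" and i: "m \<le> i" "i < n"
  shows "(closed_loop A B K ^\<^sub>m t *\<^sub>v x) $ i = (A ^\<^sub>m t *\<^sub>v x) $ i"
proof -
  have "(closed_loop A B K ^\<^sub>m t *\<^sub>v x) $ i = (A ^\<^sub>m t *\<^sub>v (closed_loop A B K ^\<^sub>m 0 *\<^sub>v x)) $ i"
  proof (rule trajectory_uncontrolled[where m = m and w = "\<lambda>t. closed_loop A B K ^\<^sub>m t *\<^sub>v x"
        and u = "\<lambda>t. K *\<^sub>v (closed_loop A B K ^\<^sub>m t *\<^sub>v x)", OF A_low B_low _ _ _ i])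
    show "closed_loop A B K ^\<^sub>m 0 *\<^sub>v x \<in> carrier_vec n" by (rule closed_loop_pow_carrier[OF K x])
    show "K *\<^sub>v (closed_loop A B K ^\<^sub>m t *\<^sub>v x) \<in> carrier_vec k" for t
      using closed_loop_pow_carrier[OF K x] K by auto
    show "closed_loop A B K ^\<^sub>m Suc t *\<^sub>v x
        = A *\<^sub>v (closed_loop A B K ^\<^sub>m t *\<^sub>v x) + B *\<^sub>v (K *\<^sub>v (closed_loop A B K ^\<^sub>m t *\<^sub>v x))" for t
      by (rule closed_loop_pow_Suc[OF K x])
  qed
  then show ?thesis using closed_loop_pow_0[OF x] by simp
qed

lemma lq_cost_shift_uncontrolled:
  assumes A_low: "\<And>i j. m \<le> i \<Longrightarrow> i < n \<Longrightarrow> j < m \<Longrightarrow> A $$ (i,j) = 0"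
    and B_low: "\<And>i j. m \<le> i \<Longrightarrow> i < n \<Longrightarrow> j < k \<Longrightarrow> B $$ (i,j) = 0"
    and Q: "Q \<in> carrier_mat n n" and Q': "Q' \<in> carrier_mat n n"
    and QQ': "\<And>i j. i < n \<Longrightarrow> j < n \<Longrightarrow> i < m \<or> j < m \<Longrightarrow> Q $$ (i,j) = Q' $$ (i,j)"
    and K: "stabilizing A B K" and x: "x \<in> carrier_vec n"
  shows "lq_cost A B Q K x
    = lq_cost A B Q' K x + (\<Sum>t. (A ^\<^sub>m t *\<^sub>v x) \<bullet> ((Q - Q') *\<^sub>v (A ^\<^sub>m t *\<^sub>v x)))"
proof -
  note Kc = stabilizing_carrier[OF K]
  define y where "y t = closed_loop A B K ^\<^sub>m t *\<^sub>v x" for t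
  have y: "geometric_decay_vec n y" unfolding y_def by (rule stabilizing_geometric_decay_vec[OF K x])
  note y_carrier = geometric_decay_vec_carrier[OF y]
  have QQ'_carrier: "Q - Q' \<in> carrier_mat n n" using Q' by (rule minus_carrier_mat)
  have shift: "y t \<bullet> ((Q - Q') *\<^sub>v y t) = (A ^\<^sub>m t *\<^sub>v x) \<bullet> ((Q - Q') *\<^sub>v (A ^\<^sub>m t *\<^sub>v x))" for t
  proof (rule quadratic_form_cong_tail[where m = m, OF QQ'_carrier _ y_carrier])
    show "A ^\<^sub>m t *\<^sub>v x \<in> carrier_vec n" using A_carrier x by (rule pow_mat_mult_vec_carrier)
    show "(Q - Q') $$ (i,j) = 0" if "i < n" "j < n" "i < m \<or> j < m" for i j
      using QQ'[OF that] Q Q' that by simp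
    show "y t $ i = (A ^\<^sub>m t *\<^sub>v x) $ i" if "m \<le> i" "i < n" for i
      unfolding y_def by (rule closed_loop_uncontrolled[OF A_low B_low Kc x that])
  qed
  have split: "y t \<bullet> (Q *\<^sub>v y t) = y t \<bullet> (Q' *\<^sub>v y t) + y t \<bullet> ((Q - Q') *\<^sub>v y t)" for t
    using Q Q' y_carrier[of t] by (simp add: minus_mult_distrib_mat_vec scalar_prod_minus_distrib)
  have summable': "summable (\<lambda>t. y t \<bullet> (Q' *\<^sub>v y t) + (K *\<^sub>v y t) \<bullet> (K *\<^sub>v y t))"
    by (intro geometric_decay_summable geometric_decay_add geometric_decay_scalar_prod[OF y]
        geometric_decay_vec_mult_mat_vec[OF Q' y]
        geometric_decay_scalar_prod[OF geometric_decay_vec_mult_mat_vec[OF Kc y]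
          geometric_decay_vec_mult_mat_vec[OF Kc y]])
  have summable_diff: "summable (\<lambda>t. y t \<bullet> ((Q - Q') *\<^sub>v y t))"
    by (intro geometric_decay_summable geometric_decay_scalar_prod[OF y]
        geometric_decay_vec_mult_mat_vec[OF QQ'_carrier y])
  have "lq_cost A B Q K x
      = (\<Sum>t. (y t \<bullet> (Q' *\<^sub>v y t) + (K *\<^sub>v y t) \<bullet> (K *\<^sub>v y t)) + y t \<bullet> ((Q - Q') *\<^sub>v y t))"
    unfolding lq_cost_def y_def[symmetric] Let_def split by (simp add: ac_simps)
  also have "\<dots> = lq_cost A B Q' K x + (\<Sum>t. y t \<bullet> ((Q - Q') *\<^sub>v y t))"
    unfolding lq_cost_def y_def[symmetric] Let_def
    by (rule suminf_add[OF summable' summable_diff, symmetric])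
  finally show ?thesis unfolding shift .
qed

lemma optimal_gain_shift_uncontrolled:
  assumes A_low: "\<And>i j. m \<le> i \<Longrightarrow> i < n \<Longrightarrow> j < m \<Longrightarrow> A $$ (i,j) = 0"
    and B_low: "\<And>i j. m \<le> i \<Longrightarrow> i < n \<Longrightarrow> j < k \<Longrightarrow> B $$ (i,j) = 0"
    and Q: "Q \<in> carrier_mat n n" and Q': "Q' \<in> carrier_mat n n"
    and QQ': "\<And>i j. i < n \<Longrightarrow> j < n \<Longrightarrow> i < m \<or> j < m \<Longrightarrow> Q $$ (i,j) = Q' $$ (i,j)"
  shows "optimal_gain A B Q K \<longleftrightarrow> optimal_gain A B Q' K"
  using lq_cost_shift_uncontrolled[OF A_low B_low Q Q' QQ'] A_carrier
  unfolding optimal_gain_def by auto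

end

section \<open>Partially controllable systems\<close>

primrec trajectory :: "real mat \<Rightarrow> real mat \<Rightarrow> real vec \<Rightarrow> (nat \<Rightarrow> real vec) \<Rightarrow> nat \<Rightarrow> real vec" where
  "trajectory A B x u 0 = x"
| "trajectory A B x u (Suc t) = A *\<^sub>v trajectory A B x u t + B *\<^sub>v u t"

definition tail_sq_norm :: "nat \<Rightarrow> real vec \<Rightarrow> real" where
  "tail_sq_norm m v = (\<Sum>i\<in>{m..<dim_vec v}. (v $ i)^2)"

lemma scalar_prod_self_diff_tail:
  assumes v: "(v :: real vec) \<in> carrier_vec n" and v': "v' \<in> carrier_vec n" and m: "m \<le> n"
    and head: "\<And>i. i < m \<Longrightarrow> v $ i = v' $ i"
  shows "v \<bullet> v - v' \<bullet> v' = tail_sq_norm m v - tail_sq_norm m v'"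
proof -
  have "v \<bullet> v - v' \<bullet> v' = (\<Sum>i\<in>{0..<n}. (v $ i)^2 - (v' $ i)^2)"
    using v v' by (simp add: scalar_prod_def sum_subtractf power2_eq_square)
  also have "\<dots> = (\<Sum>i\<in>{0..<m}. (v $ i)^2 - (v' $ i)^2) + (\<Sum>i\<in>{m..<n}. (v $ i)^2 - (v' $ i)^2)"
    using m by (intro sum.atLeastLessThan_concat[symmetric]) auto
  also have "(\<Sum>i\<in>{0..<m}. (v $ i)^2 - (v' $ i)^2) = 0" using head by simp
  finally show ?thesis using v v' by (simp add: tail_sq_norm_def sum_subtractf)
qed

lemma tail_sq_norm_cong:
  assumes "v \<in> carrier_vec n" "v' \<in> carrier_vec n" "\<And>i. m \<le> i \<Longrightarrow> i < n \<Longrightarrow> v $ i = v' $ i"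
  shows "tail_sq_norm m v = tail_sq_norm m v'"
  using assms unfolding tail_sq_norm_def by (auto intro: sum.cong)

text \<open>For the block matrices of the theorem, \<open>m1 = s\<^sub>c\<close> and \<open>m2 = s\<^sub>c + s\<^sub>e\<close>.\<close>

locale partially_controllable = lq_system +
  fixes m1 m2 :: nat
  assumes n_pos: "0 < n" and m1_le_m2: "m1 \<le> m2" and m2_le_n: "m2 \<le> n"
    and lower_left_zero: "\<And>i j. m1 \<le> i \<Longrightarrow> i < n \<Longrightarrow> j < m1 \<Longrightarrow> A $$ (i,j) = 0"
    and B_lower_zero: "\<And>i j. m1 \<le> i \<Longrightarrow> i < n \<Longrightarrow> j < k \<Longrightarrow> B $$ (i,j) = 0"
    and upper_right_zero: "\<And>i j. i < m2 \<Longrightarrow> m2 \<le> j \<Longrightarrow> j < n \<Longrightarrow> A $$ (i,j) = 0"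
begin

lemma uncontrolled_coords:
  assumes "w 0 \<in> carrier_vec n" "\<And>t. u t \<in> carrier_vec k" "\<And>t. w (Suc t) = A *\<^sub>v w t + B *\<^sub>v u t"
    and "m1 \<le> i" "i < n"
  shows "w t $ i = (A ^\<^sub>m t *\<^sub>v w 0) $ i"
  by (rule trajectory_uncontrolled[where m = m1, OF lower_left_zero B_lower_zero assms])

lemma uncontrolled_geometric_decay:
  assumes stab: "stabilizable A B" and x: "x \<in> carrier_vec n" and i: "m1 \<le> i" "i < n"
  shows "geometric_decay (\<lambda>t. (A ^\<^sub>m t *\<^sub>v x) $ i)"
proof -
  obtain K where K: "stabilizing A B K" using stab unfolding stabilizable_def by blast
  then show ?thesis
    using closed_loop_uncontrolled[OF lower_left_zero B_lower_zero stabilizing_carrier[OF K] x i]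
      geometric_decay_vec_index[OF stabilizing_geometric_decay_vec[OF K x] i(2)] by simp
qed

lemma geometric_decay_vec_if_head_agrees:
  assumes stab: "stabilizable A B" and w0: "w 0 \<in> carrier_vec n" and u: "\<And>t. u t \<in> carrier_vec k"
    and step: "\<And>t. w (Suc t) = A *\<^sub>v w t + B *\<^sub>v u t"
    and w': "geometric_decay_vec n w'" and head: "\<And>t j. j < m2 \<Longrightarrow> w t $ j = w' t $ j"
  shows "geometric_decay_vec n w"
proof (rule geometric_decay_vecI)
  show "w t \<in> carrier_vec n" for t by (rule trajectory_carrier[OF w0 u step])
  fix i assume i: "i < n"
  show "geometric_decay (\<lambda>t. w t $ i)"
  proof (cases "i < m2")
    case True
    then show ?thesis using head geometric_decay_vec_index[OF w' i] by simp
  next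
    case False
    then have "m1 \<le> i" using m1_le_m2 by simp
    then show ?thesis
      using uncontrolled_coords[OF w0 u step _ i] uncontrolled_geometric_decay[OF stab w0 _ i] by simp
  qed
qed

end

locale partially_controllable_pair =
  pc: partially_controllable A B n k m1 m2 + pc': partially_controllable A' B n k m1 m2
  for A A' B n k m1 m2 +
  assumes head_rows_eq: "\<And>i j. i < m2 \<Longrightarrow> j < n \<Longrightarrow> A $$ (i,j) = A' $$ (i,j)"
begin

lemma partially_controllable_pair_swap: "partially_controllable_pair A' A B n k m1 m2"
  by (intro partially_controllable_pair.intro partially_controllable.intro
      partially_controllable_pair_axioms.intro pc.lq_system_axioms pc'.lq_system_axioms
      pc.partially_controllable_axioms pc'.partially_controllable_axioms)
    (simp add: head_rows_eq)

lemma trajectories_agree_head: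
  assumes w0: "w 0 \<in> carrier_vec n" and u: "\<And>t. u t \<in> carrier_vec k"
    and step: "\<And>t. w (Suc t) = A *\<^sub>v w t + B *\<^sub>v u t"
    and w'0: "w' 0 \<in> carrier_vec n" and u': "\<And>t. u' t \<in> carrier_vec k"
    and step': "\<And>t. w' (Suc t) = A' *\<^sub>v w' t + B *\<^sub>v u' t"
    and inputs: "\<And>t. (\<And>j. j < m2 \<Longrightarrow> w t $ j = w' t $ j) \<Longrightarrow> u t = u' t"
    and init: "\<And>j. j < m2 \<Longrightarrow> w 0 $ j = w' 0 $ j"
  shows "j < m2 \<Longrightarrow> w t $ j = w' t $ j"
proof (induction t arbitrary: j)
  case 0
  then show ?case by (rule init)
next
  case (Suc t)
  have w: "w t \<in> carrier_vec n" by (rule pc.trajectory_carrier[OF w0 u step])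
  have w': "w' t \<in> carrier_vec n" by (rule pc'.trajectory_carrier[OF w'0 u' step'])
  have j: "j < n" using Suc.prems pc.m2_le_n by simp
  have "(A *\<^sub>v w t) $ j = (A' *\<^sub>v w' t) $ j"
  proof (rule mult_mat_vec_index_cong[OF pc.A_carrier pc'.A_carrier w w' j])
    fix i assume "i < n"
    then show "A $$ (j,i) * w t $ i = A' $$ (j,i) * w' t $ i"
      using Suc head_rows_eq pc.upper_right_zero pc'.upper_right_zero by (cases "i < m2") auto
  qed
  then show ?case
    using step[of t] step'[of t] inputs[OF Suc.IH] j w w' u[of t] pc.A_carrier pc'.A_carrier
      pc.B_carrier by simp
qed

lemma summable_tail_gap:
  assumes stab: "stabilizable A B" "stabilizable A' B"
    and x: "x \<in> carrier_vec n" and x': "x' \<in> carrier_vec n"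
  shows "summable (\<lambda>t. tail_sq_norm m2 (A ^\<^sub>m t *\<^sub>v x) - tail_sq_norm m2 (A' ^\<^sub>m t *\<^sub>v x'))"
proof -
  have "tail_sq_norm m2 (A ^\<^sub>m t *\<^sub>v x) - tail_sq_norm m2 (A' ^\<^sub>m t *\<^sub>v x')
      = (\<Sum>i\<in>{m2..<n}. (A ^\<^sub>m t *\<^sub>v x) $ i * (A ^\<^sub>m t *\<^sub>v x) $ i
          - (A' ^\<^sub>m t *\<^sub>v x') $ i * (A' ^\<^sub>m t *\<^sub>v x') $ i)"
    for t using pc.A_carrier pc'.A_carrier by (simp add: tail_sq_norm_def sum_subtractf power2_eq_square)
  moreover have "geometric_decay (\<lambda>t. \<Sum>i\<in>{m2..<n}. (A ^\<^sub>m t *\<^sub>v x) $ i * (A ^\<^sub>m t *\<^sub>v x) $ i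
      - (A' ^\<^sub>m t *\<^sub>v x') $ i * (A' ^\<^sub>m t *\<^sub>v x') $ i)"
    using pc.m1_le_m2
    by (intro geometric_decay_sum geometric_decay_diff geometric_decay_mult
        pc.uncontrolled_geometric_decay[OF stab(1) x] pc'.uncontrolled_geometric_decay[OF stab(2) x']) auto
  ultimately show ?thesis using geometric_decay_summable by simp
qed

lemma replay_cost:
  assumes stab: "stabilizable A B" "stabilizable A' B" and u: "geometric_decay_vec k u"
    and w0: "w 0 \<in> carrier_vec n" and step: "\<And>t. w (Suc t) = A *\<^sub>v w t + B *\<^sub>v u t"
    and w': "geometric_decay_vec n w'" and step': "\<And>t. w' (Suc t) = A' *\<^sub>v w' t + B *\<^sub>v u t"
    and init: "\<And>j. j < m2 \<Longrightarrow> w 0 $ j = w' 0 $ j"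
  shows "geometric_decay_vec n w"
    and "(\<Sum>t. w t \<bullet> w t + u t \<bullet> u t) = (\<Sum>t. w' t \<bullet> w' t + u t \<bullet> u t)
      + (\<Sum>t. tail_sq_norm m2 (A ^\<^sub>m t *\<^sub>v w 0) - tail_sq_norm m2 (A' ^\<^sub>m t *\<^sub>v w' 0))"
proof -
  note u_carrier = geometric_decay_vec_carrier[OF u] and w'_carrier = geometric_decay_vec_carrier[OF w']
  have head: "w t $ j = w' t $ j" if "j < m2" for t j
    using trajectories_agree_head[OF w0 u_carrier step w'_carrier[of 0] u_carrier step' _ init that] by blast
  show w: "geometric_decay_vec n w"
    by (rule pc.geometric_decay_vec_if_head_agrees[OF stab(1) w0 u_carrier step w' head])
  have "w t \<bullet> w t - w' t \<bullet> w' t = tail_sq_norm m2 (w t) - tail_sq_norm m2 (w' t)" for t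
    using head geometric_decay_vec_carrier[OF w] w'_carrier pc.m2_le_n
    by (intro scalar_prod_self_diff_tail) auto
  moreover have "tail_sq_norm m2 (w t) = tail_sq_norm m2 (A ^\<^sub>m t *\<^sub>v w 0)"
    "tail_sq_norm m2 (w' t) = tail_sq_norm m2 (A' ^\<^sub>m t *\<^sub>v w' 0)" for t
    using pc.uncontrolled_coords[OF w0 u_carrier step]
      pc'.uncontrolled_coords[OF w'_carrier[of 0] u_carrier step']
      pc.m1_le_m2 geometric_decay_vec_carrier[OF w] w'_carrier
      pow_mat_mult_vec_carrier[OF pc.A_carrier w0]
      pow_mat_mult_vec_carrier[OF pc'.A_carrier w'_carrier[of 0]]
    by (auto intro!: tail_sq_norm_cong[where n = n])
  ultimately have diff: "w t \<bullet> w t - w' t \<bullet> w' t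
      = tail_sq_norm m2 (A ^\<^sub>m t *\<^sub>v w 0) - tail_sq_norm m2 (A' ^\<^sub>m t *\<^sub>v w' 0)" for t
    by simp
  have gap: "w t \<bullet> w t + u t \<bullet> u t = (w' t \<bullet> w' t + u t \<bullet> u t)
      + (tail_sq_norm m2 (A ^\<^sub>m t *\<^sub>v w 0) - tail_sq_norm m2 (A' ^\<^sub>m t *\<^sub>v w' 0))" for t
    using diff[of t] by linarith
  have "summable (\<lambda>t. w' t \<bullet> w' t + u t \<bullet> u t)"
    by (intro geometric_decay_summable geometric_decay_add geometric_decay_scalar_prod[OF w' w']
        geometric_decay_scalar_prod[OF u u])
  then show "(\<Sum>t. w t \<bullet> w t + u t \<bullet> u t) = (\<Sum>t. w' t \<bullet> w' t + u t \<bullet> u t)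
      + (\<Sum>t. tail_sq_norm m2 (A ^\<^sub>m t *\<^sub>v w 0) - tail_sq_norm m2 (A' ^\<^sub>m t *\<^sub>v w' 0))"
    unfolding gap by (rule suminf_add[symmetric, OF _ summable_tail_gap[OF stab w0 w'_carrier[of 0]]])
qed

end

context partially_controllable
begin

lemma partially_controllable_pair_self: "partially_controllable_pair A A B n k m1 m2"
  by (intro partially_controllable_pair.intro partially_controllable_pair_axioms.intro
      partially_controllable.intro lq_system_axioms partially_controllable_axioms) simp

text \<open>Start a trajectory at \<open>x\<close> and feed it the inputs of the closed loop from \<open>x'\<close>.\<close>

lemma greedy_cost_comparison:
  assumes K: "stabilizing A B K" and P: "value_matrix A B K P" and G: "greedy_gain A B P K"
    and x: "x \<in> carrier_vec n" and x': "x' \<in> carrier_vec n" and head: "\<And>j. j < m2 \<Longrightarrow> x $ j = x' $ j"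
  shows "x \<bullet> (P *\<^sub>v x) + (K *\<^sub>v x' - K *\<^sub>v x) \<bullet> (K *\<^sub>v x' - K *\<^sub>v x)
    \<le> x' \<bullet> (P *\<^sub>v x') + (\<Sum>t. tail_sq_norm m2 (A ^\<^sub>m t *\<^sub>v x) - tail_sq_norm m2 (A ^\<^sub>m t *\<^sub>v x'))"
proof -
  interpret self: partially_controllable_pair A A B n k m1 m2 by (rule partially_controllable_pair_self)
  have stab: "stabilizable A B" using K unfolding stabilizable_def by blast
  note Kc = stabilizing_carrier[OF K]
  define y where "y t = closed_loop A B K ^\<^sub>m t *\<^sub>v x'" for t
  define u where "u t = K *\<^sub>v y t" for t
  define w where "w = trajectory A B x u"
  have y: "geometric_decay_vec n y" unfolding y_def by (rule stabilizing_geometric_decay_vec[OF K x'])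
  have u: "geometric_decay_vec k u" unfolding u_def by (rule geometric_decay_vec_mult_mat_vec[OF Kc y])
  have y_step: "y (Suc t) = A *\<^sub>v y t + B *\<^sub>v u t" for t
    unfolding y_def u_def by (rule closed_loop_pow_Suc[OF Kc x'])
  have y0: "y 0 = x'" unfolding y_def by (rule closed_loop_pow_0[OF x'])
  have w_step: "w (Suc t) = A *\<^sub>v w t + B *\<^sub>v u t" for t unfolding w_def by simp
  have w0: "w 0 = x" unfolding w_def by simp
  note replay = self.replay_cost[OF stab stab u _ w_step y y_step, unfolded w0 y0, OF x head]
  have "x \<bullet> (P *\<^sub>v x) + (K *\<^sub>v x' - K *\<^sub>v x) \<bullet> (K *\<^sub>v x' - K *\<^sub>v x) \<le> (\<Sum>t. w t \<bullet> w t + u t \<bullet> u t)"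
    using greedy_lower_bound[OF K P G replay(1) u w_step] unfolding w0 u_def y0 .
  also have "\<dots> = (\<Sum>t. y t \<bullet> y t + u t \<bullet> u t)
      + (\<Sum>t. tail_sq_norm m2 (A ^\<^sub>m t *\<^sub>v x) - tail_sq_norm m2 (A ^\<^sub>m t *\<^sub>v x'))"
    by (rule replay(2))
  also have "(\<Sum>t. y t \<bullet> y t + u t \<bullet> u t) = x' \<bullet> (P *\<^sub>v x')"
    using lq_cost_one_mat[OF x' Kc] value_matrixD(3)[OF P x'] unfolding stage_form_def y_def u_def by simp
  finally show ?thesis .
qed

lemma optimal_gain_ignores_tail:
  assumes opt: "optimal_gain A B (1\<^sub>m n) K" and a: "a \<in> carrier_vec n" and b: "b \<in> carrier_vec n"
    and head: "\<And>j. j < m2 \<Longrightarrow> a $ j = b $ j"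
  shows "K *\<^sub>v a = K *\<^sub>v b"
proof -
  interpret self: partially_controllable_pair A A B n k m1 m2 by (rule partially_controllable_pair_self)
  have K: "stabilizing A B K" using opt unfolding optimal_gain_def by blast
  then have stab: "stabilizable A B" unfolding stabilizable_def by blast
  obtain P where P: "value_matrix A B K P" and G: "greedy_gain A B P K"
    using optimal_gain_imp_greedy[OF n_pos opt] by blast
  have "(\<Sum>t. tail_sq_norm m2 (A ^\<^sub>m t *\<^sub>v b) - tail_sq_norm m2 (A ^\<^sub>m t *\<^sub>v a))
      = - (\<Sum>t. tail_sq_norm m2 (A ^\<^sub>m t *\<^sub>v a) - tail_sq_norm m2 (A ^\<^sub>m t *\<^sub>v b))"
    using suminf_minus[OF self.summable_tail_gap[OF stab stab a b]] by simp
  then have "(K *\<^sub>v b - K *\<^sub>v a) \<bullet> (K *\<^sub>v b - K *\<^sub>v a) + (K *\<^sub>v a - K *\<^sub>v b) \<bullet> (K *\<^sub>v a - K *\<^sub>v b) \<le> 0"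
    using greedy_cost_comparison[OF K P G a b head] greedy_cost_comparison[OF K P G b a] head
    by fastforce
  then have "(K *\<^sub>v b - K *\<^sub>v a) \<bullet> (K *\<^sub>v b - K *\<^sub>v a) \<le> 0"
    using scalar_prod_self_nonneg[of "K *\<^sub>v a - K *\<^sub>v b"] by linarith
  then show ?thesis
    using stabilizing_carrier[OF K] a b
    by (intro eq_if_scalar_prod_self_diff_le_0[where n = k, symmetric]) auto
qed

end

context partially_controllable_pair
begin

lemma closed_loop_inputs_agree:
  assumes opt: "optimal_gain A B (1\<^sub>m n) K" and x: "x \<in> carrier_vec n"
  shows "K *\<^sub>v (closed_loop A' B K ^\<^sub>m t *\<^sub>v x) = K *\<^sub>v (closed_loop A B K ^\<^sub>m t *\<^sub>v x)"
proof -
  have Kc: "K \<in> carrier_mat k n" using opt pc.stabilizing_carrier unfolding optimal_gain_def by blast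
  define y where "y t = closed_loop A B K ^\<^sub>m t *\<^sub>v x" for t
  define y' where "y' t = closed_loop A' B K ^\<^sub>m t *\<^sub>v x" for t
  have y: "y t \<in> carrier_vec n" and y': "y' t \<in> carrier_vec n" for t
    unfolding y_def y'_def
    using pc.closed_loop_pow_carrier[OF Kc x] pc'.closed_loop_pow_carrier[OF Kc x] .
  have ignore: "K *\<^sub>v v = K *\<^sub>v v'"
    if "v \<in> carrier_vec n" "v' \<in> carrier_vec n" "\<And>j. j < m2 \<Longrightarrow> v $ j = v' $ j" for v v'
    using pc.optimal_gain_ignores_tail[OF opt that] .
  have "y t $ j = y' t $ j" if "j < m2" for j
  proof (rule trajectories_agree_head[where u = "\<lambda>t. K *\<^sub>v y t" and u' = "\<lambda>t. K *\<^sub>v y' t",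
        OF y _ _ y' _ _ _ _ that])
    show "K *\<^sub>v y t \<in> carrier_vec k" "K *\<^sub>v y' t \<in> carrier_vec k" for t using Kc y y' by auto
    show "y (Suc t) = A *\<^sub>v y t + B *\<^sub>v (K *\<^sub>v y t)" "y' (Suc t) = A' *\<^sub>v y' t + B *\<^sub>v (K *\<^sub>v y' t)"
      for t unfolding y_def y'_def
      by (rule pc.closed_loop_pow_Suc[OF Kc x], rule pc'.closed_loop_pow_Suc[OF Kc x])
    show "K *\<^sub>v y t = K *\<^sub>v y' t" if "\<And>j. j < m2 \<Longrightarrow> y t $ j = y' t $ j" for t
      using ignore[OF y y' that] .
    show "y 0 $ j = y' 0 $ j" for j
      unfolding y_def y'_def pc.closed_loop_pow_0[OF x] pc'.closed_loop_pow_0[OF x] ..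
  qed
  then show ?thesis using ignore[OF y' y] unfolding y_def y'_def by simp
qed

lemma closed_loop_transfer:
  assumes opt: "optimal_gain A B (1\<^sub>m n) K" and stab': "stabilizable A' B" and x: "x \<in> carrier_vec n"
  shows "geometric_decay_vec n (\<lambda>t. closed_loop A' B K ^\<^sub>m t *\<^sub>v x)"
    and "lq_cost A' B (1\<^sub>m n) K x = lq_cost A B (1\<^sub>m n) K x
      + (\<Sum>t. tail_sq_norm m2 (A' ^\<^sub>m t *\<^sub>v x) - tail_sq_norm m2 (A ^\<^sub>m t *\<^sub>v x))"
proof -
  interpret swap: partially_controllable_pair A' A B n k m1 m2 by (rule partially_controllable_pair_swap)
  have K: "stabilizing A B K" using opt unfolding optimal_gain_def by blast
  then have stab: "stabilizable A B" unfolding stabilizable_def by blast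
  note Kc = pc.stabilizing_carrier[OF K]
  define y where "y t = closed_loop A B K ^\<^sub>m t *\<^sub>v x" for t
  define y' where "y' t = closed_loop A' B K ^\<^sub>m t *\<^sub>v x" for t
  define u where "u t = K *\<^sub>v y t" for t
  have y: "geometric_decay_vec n y" unfolding y_def by (rule pc.stabilizing_geometric_decay_vec[OF K x])
  have u: "geometric_decay_vec k u" unfolding u_def by (rule geometric_decay_vec_mult_mat_vec[OF Kc y])
  have same_input: "K *\<^sub>v y' t = u t" for t
    unfolding y'_def u_def y_def by (rule closed_loop_inputs_agree[OF opt x])
  have y_step: "y (Suc t) = A *\<^sub>v y t + B *\<^sub>v u t" for t
    unfolding y_def u_def by (rule pc.closed_loop_pow_Suc[OF Kc x])
  have y'_step: "y' (Suc t) = A' *\<^sub>v y' t + B *\<^sub>v u t" for t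
    unfolding same_input[symmetric] y'_def by (rule pc'.closed_loop_pow_Suc[OF Kc x])
  have y0: "y 0 = x" and y'0: "y' 0 = x"
    unfolding y_def y'_def by (rule pc.closed_loop_pow_0[OF x], rule pc'.closed_loop_pow_0[OF x])
  note replay = swap.replay_cost[OF stab' stab u _ y'_step y y_step, unfolded y0 y'0, OF x refl]
  show "geometric_decay_vec n (\<lambda>t. closed_loop A' B K ^\<^sub>m t *\<^sub>v x)"
    using replay(1) unfolding y'_def .
  have "lq_cost A' B (1\<^sub>m n) K x = (\<Sum>t. y' t \<bullet> y' t + u t \<bullet> u t)"
    using pc'.lq_cost_one_mat[OF x Kc] same_input unfolding stage_form_def y'_def by simp
  also have "\<dots> = (\<Sum>t. y t \<bullet> y t + u t \<bullet> u t)
      + (\<Sum>t. tail_sq_norm m2 (A' ^\<^sub>m t *\<^sub>v x) - tail_sq_norm m2 (A ^\<^sub>m t *\<^sub>v x))"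
    by (rule replay(2))
  also have "(\<Sum>t. y t \<bullet> y t + u t \<bullet> u t) = lq_cost A B (1\<^sub>m n) K x"
    using pc.lq_cost_one_mat[OF x Kc] unfolding stage_form_def y_def u_def by simp
  finally show "lq_cost A' B (1\<^sub>m n) K x = lq_cost A B (1\<^sub>m n) K x
      + (\<Sum>t. tail_sq_norm m2 (A' ^\<^sub>m t *\<^sub>v x) - tail_sq_norm m2 (A ^\<^sub>m t *\<^sub>v x))" .
qed

text \<open>Replay the inputs of the closed loop of \<open>K''\<close> for \<open>A'\<close> in the system \<open>A\<close>.\<close>

lemma lq_cost_transfer_le:
  assumes opt: "optimal_gain A B (1\<^sub>m n) K" and stab': "stabilizable A' B"
    and K'': "stabilizing A' B K''" and x: "x \<in> carrier_vec n"
  shows "lq_cost A' B (1\<^sub>m n) K x \<le> lq_cost A' B (1\<^sub>m n) K'' x"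
proof -
  interpret swap: partially_controllable_pair A' A B n k m1 m2 by (rule partially_controllable_pair_swap)
  have K: "stabilizing A B K" using opt unfolding optimal_gain_def by blast
  then have stab: "stabilizable A B" unfolding stabilizable_def by blast
  obtain P where P: "value_matrix A B K P" and G: "greedy_gain A B P K"
    using pc.optimal_gain_imp_greedy[OF pc.n_pos opt] by blast
  note K''_carrier = pc'.stabilizing_carrier[OF K'']
  define y where "y t = closed_loop A' B K'' ^\<^sub>m t *\<^sub>v x" for t
  define u where "u t = K'' *\<^sub>v y t" for t
  define w where "w = trajectory A B x u"
  have y: "geometric_decay_vec n y" unfolding y_def by (rule pc'.stabilizing_geometric_decay_vec[OF K'' x])
  have u: "geometric_decay_vec k u"
    unfolding u_def by (rule geometric_decay_vec_mult_mat_vec[OF K''_carrier y])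
  have y_step: "y (Suc t) = A' *\<^sub>v y t + B *\<^sub>v u t" for t
    unfolding y_def u_def by (rule pc'.closed_loop_pow_Suc[OF K''_carrier x])
  have y0: "y 0 = x" unfolding y_def by (rule pc'.closed_loop_pow_0[OF x])
  have w_step: "w (Suc t) = A *\<^sub>v w t + B *\<^sub>v u t" for t unfolding w_def by simp
  have w0: "w 0 = x" unfolding w_def by simp
  note replay = replay_cost[OF stab stab' u _ w_step y y_step, unfolded w0 y0, OF x]
  have gap: "(\<Sum>t. tail_sq_norm m2 (A ^\<^sub>m t *\<^sub>v x) - tail_sq_norm m2 (A' ^\<^sub>m t *\<^sub>v x))
      = - (\<Sum>t. tail_sq_norm m2 (A' ^\<^sub>m t *\<^sub>v x) - tail_sq_norm m2 (A ^\<^sub>m t *\<^sub>v x))"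
    using suminf_minus[OF swap.summable_tail_gap[OF stab' stab x x]] by simp
  have "x \<bullet> (P *\<^sub>v x) \<le> (\<Sum>t. w t \<bullet> w t + u t \<bullet> u t)"
    using pc.greedy_lower_bound[OF K P G replay(1) u w_step] scalar_prod_self_nonneg[of "u 0 - K *\<^sub>v x"]
    unfolding w0 by linarith
  also have "\<dots> = lq_cost A' B (1\<^sub>m n) K'' x
      + (\<Sum>t. tail_sq_norm m2 (A ^\<^sub>m t *\<^sub>v x) - tail_sq_norm m2 (A' ^\<^sub>m t *\<^sub>v x))"
    using replay(2) pc'.lq_cost_one_mat[OF x K''_carrier] unfolding stage_form_def y_def u_def by simp
  finally show ?thesis
    using closed_loop_transfer(2)[OF opt stab' x] pc.value_matrixD(3)[OF P x] gap by linarith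
qed

lemma optimal_gain_transfer:
  assumes opt: "optimal_gain A B (1\<^sub>m n) K" and stab': "stabilizable A' B"
  shows "optimal_gain A' B (1\<^sub>m n) K"
proof -
  have "K \<in> carrier_mat k n" using opt pc.stabilizing_carrier unfolding optimal_gain_def by blast
  then have "stabilizing A' B K"
    using geometric_decay_vec_LIMSEQ[OF closed_loop_transfer(1)[OF opt stab']]
    by (intro pc'.stabilizingI[OF _ pc.n_pos])
  then show ?thesis
    using lq_cost_transfer_le[OF opt stab'] pc'.A_carrier unfolding optimal_gain_def by auto
qed

lemma optimal_gain_eq:
  assumes "stabilizable A B" "stabilizable A' B"
  shows "optimal_gain A B (1\<^sub>m n) = optimal_gain A' B (1\<^sub>m n)"
proof -
  interpret swap: partially_controllable_pair A' A B n k m1 m2 by (rule partially_controllable_pair_swap)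
  show ?thesis
    using optimal_gain_transfer[OF _ assms(2)] swap.optimal_gain_transfer[OF _ assms(1)] by blast
qed

end

lemma pc_A_carrier: "pc_A sc se s3 A1 A12 A2 A32 A3 \<in> carrier_mat (sc + se + s3) (sc + se + s3)"
  unfolding pc_A_def by simp

lemma pc_B_carrier: "pc_B sc se s3 du B1 \<in> carrier_mat (sc + se + s3) du"
  unfolding pc_B_def by simp

lemma partially_controllable_pair_pc_A:
  "0 < sc + se + s3 \<Longrightarrow> partially_controllable_pair (pc_A sc se s3 A1 A12 A2 A32 A3)
     (pc_A sc se s3 A1 A12 A2 A32' A3') (pc_B sc se s3 du B1) (sc + se + s3) du sc (sc + se)"
  by unfold_locales (auto simp: pc_A_def pc_B_def)

theorem theorem1:
  fixes sc se s3 du :: nat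
    and A1 A12 A2 A32 A32' A3 A3' B1 :: "real mat"
  assumes A1: "A1 \<in> carrier_mat sc sc"
    and A12: "A12 \<in> carrier_mat sc se"
    and A2: "A2 \<in> carrier_mat se se"
    and A32: "A32 \<in> carrier_mat s3 se"
    and A32': "A32' \<in> carrier_mat s3 se"
    and A3: "A3 \<in> carrier_mat s3 s3"
    and A3': "A3' \<in> carrier_mat s3 s3"
    and B1: "B1 \<in> carrier_mat sc du"
  shows
    "(\<forall>I1p :: real mat.
        I1p \<in> carrier_mat (sc + se + s3) (sc + se + s3) \<and>
        (\<forall>i < sc + se + s3. \<forall>j < sc + se + s3. i \<noteq> j \<longrightarrow> I1p $$ (i, j) = 0) \<and>
        (\<forall>i < sc. I1p $$ (i, i) = 1) \<and>
        (\<forall>i < sc + se + s3. I1p $$ (i, i) \<in> {0, 1}) \<and>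
        stabilizable (pc_A sc se s3 A1 A12 A2 A32 A3) (pc_B sc se s3 du B1)
        \<longrightarrow>
        Kstar (pc_A sc se s3 A1 A12 A2 A32 A3) (pc_B sc se s3 du B1) (1\<^sub>m (sc + se + s3)) =
        Kstar (pc_A sc se s3 A1 A12 A2 A32 A3) (pc_B sc se s3 du B1) I1p)
     \<and>
     (stabilizable (pc_A sc se s3 A1 A12 A2 A32 A3) (pc_B sc se s3 du B1) \<and>
      stabilizable (pc_A sc se s3 A1 A12 A2 A32' A3') (pc_B sc se s3 du B1)
      \<longrightarrow>
      Kstar (pc_A sc se s3 A1 A12 A2 A32 A3) (pc_B sc se s3 du B1) (1\<^sub>m (sc + se + s3)) =
      Kstar (pc_A sc se s3 A1 A12 A2 A32' A3') (pc_B sc se s3 du B1) (1\<^sub>m (sc + se + s3)))"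
proof -
  let ?d = "sc + se + s3" and ?B = "pc_B sc se s3 du B1"
  let ?A = "pc_A sc se s3 A1 A12 A2 A32 A3" and ?A' = "pc_A sc se s3 A1 A12 A2 A32' A3'"
  interpret lq_system ?A ?B ?d du by unfold_locales (rule pc_A_carrier, rule pc_B_carrier)
  have part1: "Kstar ?A ?B (1\<^sub>m ?d) = Kstar ?A ?B I1p"
    if "I1p \<in> carrier_mat ?d ?d" "\<forall>i < ?d. \<forall>j < ?d. i \<noteq> j \<longrightarrow> I1p $$ (i, j) = 0"
      "\<forall>i < sc. I1p $$ (i, i) = 1"
    for I1p
  proof -
    have "optimal_gain ?A ?B (1\<^sub>m ?d) = optimal_gain ?A ?B I1p"
      using that
      by (intro ext optimal_gain_shift_uncontrolled[where m = sc]) (auto simp: pc_A_def pc_B_def)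
    then show ?thesis unfolding Kstar_def by simp
  qed
  have part2: "Kstar ?A ?B (1\<^sub>m ?d) = Kstar ?A' ?B (1\<^sub>m ?d)"
    if "stabilizable ?A ?B" "stabilizable ?A' ?B"
  proof (cases "?d = 0")
    case True
    then have "?A = ?A'" unfolding pc_A_def by auto
    then show ?thesis by simp
  next
    case False
    then interpret partially_controllable_pair ?A ?A' ?B ?d du sc "sc + se"
      by (intro partially_controllable_pair_pc_A) simp
    show ?thesis unfolding Kstar_def using optimal_gain_eq[OF that] by simp
  qed
  show ?thesis using part1 part2 by blast
qed

end
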